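(* Let Assumptions 1, 2 and 3 hold. Then \[[A_{\mathrm f}\;\;B_{\mathrm f}]=\bar\Delta_N\left(\mathrm{col}(\bar\Phi_N,\bar\Upsilon_N)\right)^\dagger,\] where $^\dagger$ denotes the Moore–Penrose pseudoinverse.
   Context: Fix $n\ge 1$ and real numbers $a_1,\dots,a_n,b_1,\dots,b_n$. The plant is the continuous-time SISO system $y^{(n)}+a_1y^{(n-1)}+\dots+a_ny=b_1u^{(n-1)}+\dots+b_nu$, represented in observability canonical form $\dot x=Ax+Bu$, $y=Cx$, $x(t)\in\mathbb{R}^n$, $x(0)=x_0$, where $C=[0_{1,n-1}\;1]$, $A$ is the $n\times n$ matrix whose first $n-1$ columns are $\begin{bmatrix}0_{1,n-1}\\ I_{n-1}\end{bmatrix}$ and whose last column is $(-a_n,\dots,-a_1)^\top$, and $B=(b_n,\dots,b_1)^\top$; a locally integrable input $u$ is applied on $[0,t_N]$. Assumption 1: the polynomials $s^n+a_1s^{n-1}+\dots+a_n$ and $b_1s^{n-1}+\dots+b_n$ are coprime. For real parameters $c_1,\dots,c_n,\beta$, $A_{\mathrm r}\in\mathbb{R}^{n\times n}$ is the matrix whose first $n-1$ rows are $[0_{n-1,1}\;I_{n-1}]$ and whose last row is $(-c_n,\dots,-c_1)$, and $B_{\mathrm r}=(0,\dots,0,1)^\top\in\mathbb{R}^n$. Assumption 2: $-\beta$ is not an eigenvalue of $A_{\mathrm r}$. The filters are $\dot\zeta=A_{\mathrm r}\zeta+B_{\mathrm r}u$, $\zeta(0)=0$; $\dot\mu=A_{\mathrm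 r}\mu+B_{\mathrm r}y$, $\mu(0)=0$; $\chi=\mathrm{col}(\zeta,\mu)\in\mathbb{R}^{2n}$; $\dot\phi=-\beta\phi+\chi$, $\phi(0)=0_{2n,1}$; $\dot\upsilon=-\beta\upsilon+u$, $\upsilon(0)=0$; $\delta=\chi-\beta\phi$. Define $A_{\mathrm f}=\begin{bmatrix}A_{\mathrm r}&0_{n,n}\\ L_b& A_a\end{bmatrix}\in\mathbb{R}^{2n\times 2n}$, where $L_b\in\mathbb{R}^{n\times n}$ has all rows zero except the last, which equals $(b_n,\dots,b_1)$, and $A_a\in\mathbb{R}^{n\times n}$ has first $n-1$ rows $[0_{n-1,1}\;I_{n-1}]$ and last row $(-a_n,\dots,-a_1)$; $B_{\mathrm f}=\mathrm{col}(0_{n-1,1},1,0_{n,1})\in\mathbb{R}^{2n}$; $G_{\mathrm f}\in\mathbb{R}^{2n\times n}$ is the matrix whose only nonzero entry is a $1$ in position $(2n,n)$. Let $\Gamma^\star=G_{\mathrm f}(A_{\mathrm r}^\top+\beta I_n)^{-1}$ and $\epsilon(t)=\Gamma^\star(\mathrm{e}^{A_{\mathrm r}^\top t}-\mathrm{e}^{-\beta t}I_n)x_0$. For sampling times $0<t_1<\dots<t_N$ let $\Delta_N=[\delta(t_1)\cdots\delta(t_N)]$, $\Phi_N=[\phi(t_1)\cdots\phi(t_N)]\in\mathbb{R}^{2n\times N}$, $\Upsilon_N=[\upsilon(t_1)\cdots\upsilon(t_N)]\in\mathbb{R}^{1\times N}$, $E_N=[\epsilon(t_1)\cdots\epsilon(t_N)]$.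 Assumption 3: there is $W_N\in\mathbb{R}^{N\times\bar N}$ with $E_NW_N=0_{2n,\bar N}$ such that, with $\bar\Delta_N=\Delta_NW_N$, $\bar\Phi_N=\Phi_NW_N$, $\bar\Upsilon_N=\Upsilon_NW_N$, one has $\mathrm{rank}(\mathrm{col}(\bar\Phi_N,\bar\Upsilon_N))=2n+1$. *)

theory Defs imports "Jordan_Normal_Form.DL_Rank" "Jordan_Normal_Form.Char_Poly"
  "Jordan_Normal_Form.Gauss_Jordan_Elimination"
  "HOL-Analysis.Analysis" "HOL-Computational_Algebra.Polynomial_Factorial"
begin

(* Conventions: matrices/vectors are Jordan_Normal_Form matrices, 0-indexed.
   Parameter sequences a, b, c :: nat => real are 1-indexed (a 1, ..., a n). *)

definition plant_A :: "nat \<Rightarrow> (nat \<Rightarrow> real) \<Rightarrow> real mat" where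
  "plant_A n a = Matrix.mat n n (\<lambda>(i,j). if j = n - 1 then - a (n - i) else if i = j + 1 then 1 else 0)"

definition plant_B :: "nat \<Rightarrow> (nat \<Rightarrow> real) \<Rightarrow> real Matrix.vec" where
  "plant_B n b = Matrix.vec n (\<lambda>i. b (n - i))"

definition plant_C :: "nat \<Rightarrow> real mat" where
  "plant_C n = Matrix.mat 1 n (\<lambda>(i,j). if j = n - 1 then 1 else 0)"

text \<open>Companion matrix: first n-1 rows [0 I], last row (-c_n, ..., -c_1).
  Used both for A_r (with c) and A_a (with a).\<close>
definition comp_mat :: "nat \<Rightarrow> (nat \<Rightarrow> real) \<Rightarrow> real mat" where
  "comp_mat n c = Matrix.mat n n (\<lambda>(i,j). if i = n - 1 then - c (n - j) else if j = i + 1 then 1 else 0)"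

definition B_r :: "nat \<Rightarrow> real Matrix.vec" where
  "B_r n = unit_vec n (n - 1)"

definition L_b :: "nat \<Rightarrow> (nat \<Rightarrow> real) \<Rightarrow> real mat" where
  "L_b n b = Matrix.mat n n (\<lambda>(i,j). if i = n - 1 then b (n - j) else 0)"

definition A_f :: "nat \<Rightarrow> (nat \<Rightarrow> real) \<Rightarrow> (nat \<Rightarrow> real) \<Rightarrow> (nat \<Rightarrow> real) \<Rightarrow> real mat" where
  "A_f n a b c = four_block_mat (comp_mat n c) (0\<^sub>m n n) (L_b n b) (comp_mat n a)"

definition B_f :: "nat \<Rightarrow> real Matrix.vec" where
  "B_f n = Matrix.vec (2 * n) (\<lambda>i. if i = n - 1 then 1 else 0)"

definition G_f :: "nat \<Rightarrow> real mat" where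
  "G_f n = Matrix.mat (2 * n) n (\<lambda>(i,j). if i = 2 * n - 1 \<and> j = n - 1 then 1 else 0)"

definition AB_f :: "nat \<Rightarrow> (nat \<Rightarrow> real) \<Rightarrow> (nat \<Rightarrow> real) \<Rightarrow> (nat \<Rightarrow> real) \<Rightarrow> real mat" where
  "AB_f n a b c = Matrix.mat (2 * n) (2 * n + 1)
     (\<lambda>(i,j). if j < 2 * n then A_f n a b c $$ (i,j) else B_f n $ i)"

definition mat_exp :: "real mat \<Rightarrow> real \<Rightarrow> real mat" where
  "mat_exp M t = Matrix.mat (dim_row M) (dim_col M)
     (\<lambda>(i,j). \<Sum>k. (t ^ k / fact k) * (M ^\<^sub>m k) $$ (i,j))"

definition Gamma_star :: "nat \<Rightarrow> (nat \<Rightarrow> real) \<Rightarrow> real \<Rightarrow> real mat" where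
  "Gamma_star n c \<beta> = G_f n * the (mat_inverse (transpose_mat (comp_mat n c) + \<beta> \<cdot>\<^sub>m 1\<^sub>m n))"

definition eps :: "nat \<Rightarrow> (nat \<Rightarrow> real) \<Rightarrow> real \<Rightarrow> real Matrix.vec \<Rightarrow> real \<Rightarrow> real Matrix.vec" where
  "eps n c \<beta> x0 t = Gamma_star n c \<beta> *\<^sub>v
     ((mat_exp (transpose_mat (comp_mat n c)) t - exp (- \<beta> * t) \<cdot>\<^sub>m 1\<^sub>m n) *\<^sub>v x0)"

text \<open>z solves z' = M z + f(t), z(0) = z0 on [0,T] in the Caratheodory sense
  (integral equation, componentwise Henstock-Kurzweil integral).\<close>
definition solves_ode :: "real \<Rightarrow> real mat \<Rightarrow> (real \<Rightarrow> real Matrix.vec) \<Rightarrow> real Matrix.vec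
    \<Rightarrow> (real \<Rightarrow> real Matrix.vec) \<Rightarrow> bool" where
  "solves_ode T M f z0 z \<longleftrightarrow>
     (\<forall>t\<in>{0..T}. dim_vec (z t) = dim_row M \<and>
        (\<forall>i<dim_row M. ((\<lambda>s. (M *\<^sub>v z s + f s) $ i) has_integral (z t $ i - z0 $ i)) {0..t}))"

text \<open>Data matrix with columns g(t_1), ..., g(t_N) (t_k = ts k, 1-indexed).\<close>
definition sample_mat :: "nat \<Rightarrow> nat \<Rightarrow> (nat \<Rightarrow> real) \<Rightarrow> (real \<Rightarrow> real Matrix.vec) \<Rightarrow> real mat" where
  "sample_mat m N ts g = Matrix.mat m N (\<lambda>(i,j). g (ts (Suc j)) $ i)"

definition is_pinv :: "real mat \<Rightarrow> real mat \<Rightarrow> bool" where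
  "is_pinv M P \<longleftrightarrow> P \<in> carrier_mat (dim_col M) (dim_row M) \<and>
     M * P * M = M \<and> P * M * P = P \<and>
     transpose_mat (M * P) = M * P \<and> transpose_mat (P * M) = P * M"

definition pinv :: "real mat \<Rightarrow> real mat" where
  "pinv M = (THE P. is_pinv M P)"

end

(* Each component of delta - A_f phi - B_f upsilon - epsilon solves R' = - beta R with R(0) = 0,
   hence vanishes by Gronwall's argument; so delta(t) = [A_f B_f] col(phi(t), upsilon(t)) + epsilon(t)
   at every sampling time.  The filter block rests on one identity: with the Bezoutians K and J of the
   filter polynomial against a - c and against -b, the state w = x + K mu + J zeta no longer sees the
   input and solves w' = A_r^T w, so y + (a - c).mu - b.zeta = (exp(A_r^T t) x0)_n, and filtering this
   by 1/(s + beta) gives exactly the last entry of epsilon.  Sampling yields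
   Delta_N = [A_f B_f] col(Phi_N, Upsilon_N) + E_N; multiplying by W removes E_N, and the pseudoinverse
   of the full-row-rank matrix col(Phi_N W, Upsilon_N W) is a right inverse. *)

theory Submission
  imports Defs
begin

lemma continuous_on_primitive:
  fixes g D :: "real \<Rightarrow> real"
  assumes D: "\<And>t. t \<in> {0..T} \<Longrightarrow> (g has_integral D t) {0..t}"
  shows "continuous_on {0..T} D"
proof (cases "0 \<le> T")
  case True
  have "(g has_integral D T) {0..T}" by (rule D) (simp add: True)
  then have "g integrable_on {0..T}" by (rule has_integral_integrable)
  moreover have "D t = integral {0..t} g" if "t \<in> {0..T}" for t
    using D[OF that] by (simp add: integral_unique)
  ultimately show ?thesis
    using continuous_on_eq[OF indefinite_integral_continuous_1] by metis
qed simp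

lemma primitive_has_real_derivative:
  fixes g D :: "real \<Rightarrow> real"
  assumes D: "\<And>t. t \<in> {0..T} \<Longrightarrow> (g has_integral D t) {0..t}"
    and g: "continuous_on {0..T} g" and x: "x \<in> {0..T}"
  shows "(D has_real_derivative g x) (at x within {0..T})"
proof (rule has_field_derivative_transform_within[OF integral_has_real_derivative[OF g x]])
  show "\<And>y. y \<in> {0..T} \<Longrightarrow> dist y x < 1 \<Longrightarrow> integral {0..y} g = D y"
    using D by (simp add: integral_unique)
qed (use x in auto)

lemma quadratic_form_le:
  fixes m :: "nat \<Rightarrow> nat \<Rightarrow> real" and v :: "nat \<Rightarrow> real"
  shows "(\<Sum>i<n. v i * (\<Sum>j<n. m i j * v j)) \<le> (\<Sum>i<n. \<Sum>j<n. \<bar>m i j\<bar>) * (\<Sum>i<n. (v i)\<^sup>2)"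
proof -
  have "m i j * (v i * v j) \<le> \<bar>m i j\<bar> * (\<Sum>i<n. (v i)\<^sup>2)" if "i < n" "j < n" for i j
  proof -
    have sq: "(v k)\<^sup>2 \<le> (\<Sum>i<n. (v i)\<^sup>2)" if "k < n" for k
      using that by (intro member_le_sum) auto
    have "2 * \<bar>v i * v j\<bar> \<le> (v i)\<^sup>2 + (v j)\<^sup>2"
      using sum_squares_bound[of "\<bar>v i\<bar>" "\<bar>v j\<bar>"] by (simp add: abs_mult)
    then have "\<bar>v i * v j\<bar> \<le> (\<Sum>i<n. (v i)\<^sup>2)" using sq[OF \<open>i < n\<close>] sq[OF \<open>j < n\<close>] by auto
    then have "\<bar>m i j\<bar> * \<bar>v i * v j\<bar> \<le> \<bar>m i j\<bar> * (\<Sum>i<n. (v i)\<^sup>2)"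
      by (rule mult_left_mono) simp
    then show ?thesis by (metis abs_ge_self abs_mult order_trans)
  qed
  then have "(\<Sum>i<n. \<Sum>j<n. m i j * (v i * v j)) \<le> (\<Sum>i<n. \<Sum>j<n. \<bar>m i j\<bar> * (\<Sum>i<n. (v i)\<^sup>2))"
    by (intro sum_mono) auto
  moreover have "(\<Sum>i<n. v i * (\<Sum>j<n. m i j * v j)) = (\<Sum>i<n. \<Sum>j<n. m i j * (v i * v j))"
    by (simp add: sum_distrib_left algebra_simps)
  ultimately show ?thesis by (simp add: sum_distrib_right)
qed

lemma sum_squares_has_real_derivative:
  assumes "\<And>i. i < n \<Longrightarrow> (f i has_real_derivative f' i) (at x within S)"
  shows "((\<lambda>s. \<Sum>i<n. (f i s)\<^sup>2) has_real_derivative (\<Sum>i<n. 2 * f i x * f' i)) (at x within S)"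
  by (rule DERIV_sum) (auto intro!: derivative_eq_intros assms)

text \<open>Gronwall's argument: the energy \<open>\<Sum>i. D i t\<^sup>2\<close>, damped by \<open>exp (- 2 L t)\<close>, is non-increasing.\<close>

lemma linear_ode_zero_solution:
  fixes D :: "nat \<Rightarrow> real \<Rightarrow> real" and m :: "nat \<Rightarrow> nat \<Rightarrow> real"
  assumes D': "\<And>i x. i < n \<Longrightarrow> x \<in> {0..T} \<Longrightarrow>
      (D i has_real_derivative (\<Sum>j<n. m i j * D j x)) (at x within {0..T})"
    and D0: "\<And>i. i < n \<Longrightarrow> D i 0 = 0" and t: "t \<in> {0..T}" and i: "i < n"
  shows "D i t = 0"
proof -
  define L where "L = (\<Sum>i<n. \<Sum>j<n. \<bar>m i j\<bar>)"
  define E where "E s = (\<Sum>i<n. (D i s)\<^sup>2)" for s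
  define F where "F s = exp (- (2 * L) * s) * E s" for s
  define F' where "F' s = exp (- (2 * L) * s) * (2 * (\<Sum>i<n. D i s * (\<Sum>j<n. m i j * D j s)) - 2 * L * E s)" for s
  have F': "(F has_real_derivative F' x) (at x within {0..T})" if "x \<in> {0..T}" for x
  proof -
    have "((\<lambda>s. exp (- (2 * L) * s)) has_real_derivative exp (- (2 * L) * x) * (- (2 * L))) (at x within {0..T})"
      by (auto intro!: derivative_eq_intros)
    from DERIV_mult'[OF this sum_squares_has_real_derivative[where f = D, OF D'[OF _ that]]] show ?thesis
      unfolding F_def[abs_def] F'_def E_def by (simp add: algebra_simps sum_distrib_left)
  qed
  have "F t \<le> F 0"
  proof (rule DERIV_nonpos_imp_decreasing_open[of 0 t F])
    fix x assume x: "0 < x" "x < t"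
    then have "at x within {0..T} = at x" using t by (intro at_within_Icc_at) auto
    moreover have "(\<Sum>i<n. D i x * (\<Sum>j<n. m i j * D j x)) \<le> L * E x"
      using quadratic_form_le[where m = m and v = "\<lambda>i. D i x" and n = n] unfolding L_def E_def .
    then have "F' x \<le> 0" unfolding F'_def by (intro mult_nonneg_nonpos) auto
    ultimately show "\<exists>y. DERIV F x :> y \<and> y \<le> 0" using F'[of x] x t by auto
  next
    show "continuous_on {0..t} F"
      using t by (intro continuous_on_subset[OF DERIV_continuous_on[OF F']]) auto
  qed (use t in auto)
  moreover have "F 0 = 0" unfolding F_def E_def using D0 by simp
  ultimately have "E t \<le> 0" unfolding F_def by (simp add: mult_le_0_iff)
  moreover have "0 \<le> E t" unfolding E_def by (simp add: sum_nonneg)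
  ultimately have "(\<Sum>i<n. (D i t)\<^sup>2) = 0" unfolding E_def by linarith
  then show ?thesis using i by (simp add: sum_nonneg_eq_0_iff)
qed

lemma linear_integral_equation_zero_solution:
  fixes D :: "nat \<Rightarrow> real \<Rightarrow> real" and m :: "nat \<Rightarrow> nat \<Rightarrow> real"
  assumes D: "\<And>t i. t \<in> {0..T} \<Longrightarrow> i < n \<Longrightarrow> ((\<lambda>s. \<Sum>j<n. m i j * D j s) has_integral D i t) {0..t}"
    and t: "t \<in> {0..T}" and i: "i < n"
  shows "D i t = 0"
proof (rule linear_ode_zero_solution[OF _ _ t i])
  fix k x assume k: "k < n" and x: "x \<in> {0..T}"
  have "continuous_on {0..T} (D j)" if "j < n" for j
    by (rule continuous_on_primitive[OF D[OF _ that]])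
  then have "continuous_on {0..T} (\<lambda>s. \<Sum>j<n. m k j * D j s)"
    by (intro continuous_intros) auto
  from primitive_has_real_derivative[OF D[OF _ k] this x]
  show "(D k has_real_derivative (\<Sum>j<n. m k j * D j x)) (at x within {0..T})" .
next
  fix k assume k: "k < n"
  have "((\<lambda>s. \<Sum>j<n. m k j * D j s) has_integral D k 0) {0}"
    using D[OF _ k, of 0] t by simp
  from has_integral_unique[OF this has_integral_refl(2)] show "D k 0 = 0" .
qed

lemma scalar_integral_equation_zero_solution:
  fixes R :: "real \<Rightarrow> real"
  assumes R: "\<And>t. t \<in> {0..T} \<Longrightarrow> ((\<lambda>s. k * R s) has_integral R t) {0..t}" and t: "t \<in> {0..T}"
  shows "R t = 0"
  by (rule linear_integral_equation_zero_solution[where m = "\<lambda>_ _. k" and n = 1 and D = "\<lambda>_. R" and i = 0, OF _ t])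
    (use R in auto)

lemma pow_mat_Suc_left:
  fixes M :: "'a::semiring_1 mat"
  assumes M: "M \<in> carrier_mat n n"
  shows "M ^\<^sub>m Suc k = M * M ^\<^sub>m k"
proof (induct k)
  case (Suc k)
  have "M * M ^\<^sub>m Suc k = (M * M ^\<^sub>m k) * M"
    using M by (simp add: assoc_mult_mat[symmetric, of _ n n _ n _ n])
  then show ?case using Suc by simp
qed (use M in simp)

lemma mult_mat_entry:
  assumes "A \<in> carrier_mat m n" "B \<in> carrier_mat n p" "i < m" "j < p"
  shows "(A * B) $$ (i,j) = (\<Sum>l<n. A $$ (i,l) * B $$ (l,j))"
  using assms by (simp add: scalar_prod_def atLeast0LessThan)

lemma mult_mat_vec_entry:
  assumes "A \<in> carrier_mat m n" "v \<in> carrier_vec n" "i < m"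
  shows "(A *\<^sub>v v) $ i = (\<Sum>l<n. A $$ (i,l) * v $ l)"
  using assms by (simp add: scalar_prod_def atLeast0LessThan mult.commute)

lemma abs_pow_mat_entry_le:
  fixes M :: "real mat"
  assumes M: "M \<in> carrier_mat n n"
  shows "i < n \<Longrightarrow> j < n \<Longrightarrow> \<bar>(M ^\<^sub>m k) $$ (i,j)\<bar> \<le> (\<Sum>a<n. \<Sum>b<n. \<bar>M $$ (a,b)\<bar>) ^ k"
proof (induct k arbitrary: i j)
  case (Suc k)
  define R where "R = (\<Sum>a<n. \<Sum>b<n. \<bar>M $$ (a,b)\<bar>)"
  have "\<bar>(M ^\<^sub>m Suc k) $$ (i,j)\<bar> = \<bar>\<Sum>l<n. (M ^\<^sub>m k) $$ (i,l) * M $$ (l,j)\<bar>"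
    using M Suc.prems mult_mat_entry[of "M ^\<^sub>m k" n n M n i j] by simp
  also have "\<dots> \<le> (\<Sum>l<n. R ^ k * \<bar>M $$ (l,j)\<bar>)"
    unfolding R_def by (rule order_trans[OF sum_abs], rule sum_mono)
      (auto simp: abs_mult intro!: mult_right_mono Suc.hyps Suc.prems)
  also have "\<dots> = R ^ k * (\<Sum>l<n. \<bar>M $$ (l,j)\<bar>)" by (simp add: sum_distrib_left)
  also have "\<dots> \<le> R ^ k * R"
  proof (rule mult_left_mono)
    show "(\<Sum>l<n. \<bar>M $$ (l,j)\<bar>) \<le> R" unfolding R_def
      by (intro sum_mono member_le_sum) (use Suc.prems in auto)
  qed (simp add: R_def sum_nonneg)
  finally show ?case unfolding R_def by (simp add: mult.commute)
qed (use M in auto)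

lemma summable_mat_exp_entry:
  fixes M :: "real mat"
  assumes M: "M \<in> carrier_mat n n" and ij: "i < n" "j < n"
  shows "summable (\<lambda>k. (M ^\<^sub>m k) $$ (i,j) / fact k * t ^ k)"
proof (rule summable_comparison_test[OF _ summable_exp], intro exI allI impI)
  define R where "R = (\<Sum>a<n. \<Sum>b<n. \<bar>M $$ (a,b)\<bar>)"
  fix k :: nat
  have "norm ((M ^\<^sub>m k) $$ (i,j) / fact k * t ^ k) = \<bar>(M ^\<^sub>m k) $$ (i,j)\<bar> * \<bar>t\<bar> ^ k / fact k"
    by (simp add: abs_mult power_abs)
  also have "\<dots> \<le> R ^ k * \<bar>t\<bar> ^ k / fact k"
    using abs_pow_mat_entry_le[OF M ij, of k] unfolding R_def
    by (intro divide_right_mono mult_right_mono) auto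
  also have "\<dots> = inverse (fact k) * (R * \<bar>t\<bar>) ^ k" by (simp add: power_mult_distrib field_simps)
  finally show "norm ((M ^\<^sub>m k) $$ (i,j) / fact k * t ^ k) \<le> inverse (fact k) * (R * \<bar>t\<bar>) ^ k" .
qed

lemma mat_exp_entry:
  assumes "M \<in> carrier_mat n n" "i < n" "j < n"
  shows "mat_exp M t $$ (i,j) = (\<Sum>k. (M ^\<^sub>m k) $$ (i,j) / fact k * t ^ k)"
  using assms unfolding mat_exp_def by (simp add: field_simps)

lemma mat_exp_carrier: "M \<in> carrier_mat n n \<Longrightarrow> mat_exp M t \<in> carrier_mat n n"
  unfolding mat_exp_def by auto

lemma mat_exp_entry_has_real_derivative:
  assumes M: "M \<in> carrier_mat n n" and ij: "i < n" "j < n"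
  shows "((\<lambda>t. mat_exp M t $$ (i,j)) has_real_derivative
      (\<Sum>l<n. M $$ (i,l) * mat_exp M t $$ (l,j))) (at t)"
proof -
  define c where "c k = (M ^\<^sub>m k) $$ (i,j) / fact k" for k
  have "((\<lambda>t. \<Sum>k. c k * t ^ k) has_real_derivative (\<Sum>k. diffs c k * t ^ k)) (at t)"
    by (rule termdiffs_strong_converges_everywhere) (use summable_mat_exp_entry[OF M ij] in \<open>simp add: c_def\<close>)
  moreover have "diffs c k * t ^ k = (\<Sum>l<n. M $$ (i,l) * ((M ^\<^sub>m k) $$ (l,j) / fact k * t ^ k))" for k
  proof -
    have "fact k + fact k * real k > 0" by (simp add: add_pos_nonneg)
    then have "diffs c k = (M ^\<^sub>m Suc k) $$ (i,j) / fact k"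
      unfolding diffs_def c_def by (simp add: field_simps)
    also have "\<dots> = (\<Sum>l<n. M $$ (i,l) * (M ^\<^sub>m k) $$ (l,j)) / fact k"
      unfolding pow_mat_Suc_left[OF M] using M ij mult_mat_entry[of M n n "M ^\<^sub>m k" n i j] by simp
    finally show ?thesis by (simp add: sum_distrib_right sum_divide_distrib mult.assoc)
  qed
  moreover have "(\<Sum>k. \<Sum>l<n. M $$ (i,l) * ((M ^\<^sub>m k) $$ (l,j) / fact k * t ^ k))
      = (\<Sum>l<n. M $$ (i,l) * mat_exp M t $$ (l,j))"
  proof -
    have "(\<Sum>k. \<Sum>l<n. M $$ (i,l) * ((M ^\<^sub>m k) $$ (l,j) / fact k * t ^ k))
        = (\<Sum>l<n. \<Sum>k. M $$ (i,l) * ((M ^\<^sub>m k) $$ (l,j) / fact k * t ^ k))"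
      by (rule suminf_sum, rule summable_mult, rule summable_mat_exp_entry[OF M]) (use ij in auto)
    also have "\<dots> = (\<Sum>l<n. M $$ (i,l) * mat_exp M t $$ (l,j))"
    proof (rule sum.cong[OF refl])
      fix l assume "l \<in> {..<n}"
      then have l: "l < n" by simp
      show "(\<Sum>k. M $$ (i,l) * ((M ^\<^sub>m k) $$ (l,j) / fact k * t ^ k)) = M $$ (i,l) * mat_exp M t $$ (l,j)"
        unfolding mat_exp_entry[OF M l ij(2)] by (rule suminf_mult[OF summable_mat_exp_entry[OF M l ij(2)]])
    qed
    finally show ?thesis .
  qed
  ultimately show ?thesis using M ij by (simp add: mat_exp_entry c_def)
qed

lemma mat_exp_0_mult_vec:
  assumes M: "(M::real mat) \<in> carrier_mat n n" and x0: "x0 \<in> carrier_vec n"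
  shows "mat_exp M 0 *\<^sub>v x0 = x0"
proof (rule eq_vecI)
  fix i assume "i < dim_vec x0"
  then have i: "i < n" using x0 by simp
  have "mat_exp M 0 $$ (i,j) = (if i = j then 1 else 0)" if "j < n" for j
    using M i that powser_zero[of "\<lambda>k. (M ^\<^sub>m k) $$ (i,j) / fact k"] by (simp add: mat_exp_entry)
  then show "(mat_exp M 0 *\<^sub>v x0) $ i = x0 $ i"
    using M x0 i by (simp add: mult_mat_vec_entry[OF mat_exp_carrier] if_distrib[of "\<lambda>z. z * _"] cong: if_cong)
qed (use M x0 carrier_matD[OF mat_exp_carrier[OF M]] in simp)

lemma mat_exp_mult_vec_has_real_derivative:
  assumes M: "(M::real mat) \<in> carrier_mat n n" and x0: "x0 \<in> carrier_vec n" and i: "i < n"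
  shows "((\<lambda>t. (mat_exp M t *\<^sub>v x0) $ i) has_real_derivative
      (\<Sum>l<n. M $$ (i,l) * (mat_exp M t *\<^sub>v x0) $ l)) (at t)"
proof -
  have E: "mat_exp M s \<in> carrier_mat n n" for s by (rule mat_exp_carrier[OF M])
  have "((\<lambda>t. \<Sum>j<n. mat_exp M t $$ (i,j) * x0 $ j) has_real_derivative
      (\<Sum>j<n. (\<Sum>l<n. M $$ (i,l) * mat_exp M t $$ (l,j)) * x0 $ j)) (at t)"
    by (intro DERIV_sum DERIV_cmult_right mat_exp_entry_has_real_derivative[OF M i]) auto
  also have "(\<Sum>j<n. (\<Sum>l<n. M $$ (i,l) * mat_exp M t $$ (l,j)) * x0 $ j)
      = (\<Sum>l<n. M $$ (i,l) * (\<Sum>j<n. mat_exp M t $$ (l,j) * x0 $ j))"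
  proof -
    have "(\<Sum>j<n. (\<Sum>l<n. M $$ (i,l) * mat_exp M t $$ (l,j)) * x0 $ j)
        = (\<Sum>j<n. \<Sum>l<n. M $$ (i,l) * (mat_exp M t $$ (l,j) * x0 $ j))"
      by (simp add: sum_distrib_right mult.assoc)
    also have "\<dots> = (\<Sum>l<n. \<Sum>j<n. M $$ (i,l) * (mat_exp M t $$ (l,j) * x0 $ j))"
      by (rule sum.swap)
    finally show ?thesis by (simp add: sum_distrib_left)
  qed
  finally show ?thesis
    using E x0 i by (simp add: mult_mat_vec_entry[OF E])
qed

text \<open>\<open>comp_poly_coeff n c l\<close> is the coefficient of \<open>s\<^sup>l\<close> in \<open>s\<^sup>n + c\<^sub>1 s\<^sup>n\<^sup>-\<^sup>1 + \<dots> + c\<^sub>n\<close>,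
  the characteristic polynomial of \<open>comp_mat n c\<close>; \<open>bezout_entry n c v\<close> is the Bezoutian of this
  polynomial and \<open>\<Sum>k. v k s\<^sup>k\<close>.\<close>

definition comp_poly_coeff :: "nat \<Rightarrow> (nat \<Rightarrow> real) \<Rightarrow> nat \<Rightarrow> real" where
  "comp_poly_coeff n c l = (if l = n then 1 else if l < n then c (n - l) else 0)"

definition bezout_entry :: "nat \<Rightarrow> (nat \<Rightarrow> real) \<Rightarrow> (nat \<Rightarrow> real) \<Rightarrow> nat \<Rightarrow> nat \<Rightarrow> real" where
  "bezout_entry n c v i j = (\<Sum>k\<le>i. comp_poly_coeff n c (i+j+1-k) * v k - v (i+j+1-k) * comp_poly_coeff n c k)"

lemma sum_mult_reflect:
  fixes f g :: "nat \<Rightarrow> real"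
  shows "(\<Sum>k\<in>{a..b}. f k * g (a+b-k)) = (\<Sum>k\<in>{a..b}. f (a+b-k) * g k)"
  by (subst sum.atLeastAtMost_rev) (auto intro!: sum.cong simp: add.commute)

lemma bezout_entry_last_col:
  assumes v: "\<And>l. l \<ge> n \<Longrightarrow> v l = 0" and i: "i < n"
  shows "bezout_entry n c v i (n-1) = v i"
proof -
  have "bezout_entry n c v i (n-1) = (\<Sum>k\<le>i. if k = i then v k else 0)"
    unfolding bezout_entry_def
  proof (rule sum.cong[OF refl])
    fix k assume k: "k \<in> {..i}"
    then have "v (i + (n-1) + 1 - k) = 0" using v i by auto
    moreover have "comp_poly_coeff n c (i + (n-1) + 1 - k) = (if k = i then 1 else 0)"
      unfolding comp_poly_coeff_def using k i by auto
    ultimately show "comp_poly_coeff n c (i + (n-1) + 1 - k) * v k - v (i + (n-1) + 1 - k) * comp_poly_coeff n c k = (if k = i then v k else 0)"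
      by simp
  qed
  then show ?thesis by simp
qed

lemma bezout_entry_last_row:
  assumes v: "\<And>l. l \<ge> n \<Longrightarrow> v l = 0" and j: "j < n"
  shows "bezout_entry n c v (n-1) j = v j"
proof -
  have n: "n \<ge> 1" using j by simp
  have split: "{..n-1} = {..<j} \<union> {j} \<union> {j+1..n-1}" using j by auto
  have "bezout_entry n c v (n-1) j = (\<Sum>k\<le>n-1. comp_poly_coeff n c (n+j-k) * v k - v (n+j-k) * comp_poly_coeff n c k)"
    unfolding bezout_entry_def using n by (intro sum.cong) auto
  also have "\<dots> = (\<Sum>k\<in>{..<j}. comp_poly_coeff n c (n+j-k) * v k - v (n+j-k) * comp_poly_coeff n c k)
      + (comp_poly_coeff n c n * v j - v n * comp_poly_coeff n c j)
      + (\<Sum>k\<in>{j+1..n-1}. comp_poly_coeff n c (n+j-k) * v k - v (n+j-k) * comp_poly_coeff n c k)"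
    unfolding split by (subst sum.union_disjoint, auto)+
  also have "(\<Sum>k\<in>{..<j}. comp_poly_coeff n c (n+j-k) * v k - v (n+j-k) * comp_poly_coeff n c k) = 0"
    by (rule sum.neutral) (auto simp: comp_poly_coeff_def v)
  also have "(\<Sum>k\<in>{j+1..n-1}. comp_poly_coeff n c (n+j-k) * v k - v (n+j-k) * comp_poly_coeff n c k) = 0"
  proof -
    have e: "(j+1)+(n-1) = n+j" using n by simp
    have "(\<Sum>k\<in>{j+1..n-1}. comp_poly_coeff n c (n+j-k) * v k) = (\<Sum>k\<in>{j+1..n-1}. v k * comp_poly_coeff n c (n+j-k))"
      by (simp add: mult.commute)
    also have "\<dots> = (\<Sum>k\<in>{j+1..n-1}. v (n+j-k) * comp_poly_coeff n c k)"
      using sum_mult_reflect[of v "comp_poly_coeff n c" "j+1" "n-1"] unfolding e .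
    finally show ?thesis by (simp add: sum_subtractf)
  qed
  finally show ?thesis using v[of n] by (simp add: comp_poly_coeff_def)
qed

lemma bezout_entry_Suc_row:
  "bezout_entry n c v (Suc i) j
    = bezout_entry n c v i (Suc j) + (comp_poly_coeff n c (Suc j) * v (Suc i) - v (Suc j) * comp_poly_coeff n c (Suc i))"
  unfolding bezout_entry_def by (simp add: sum.atMost_Suc)

lemma bezout_entry_first_row:
  "bezout_entry n c v 0 j = comp_poly_coeff n c (Suc j) * v 0 - v (Suc j) * comp_poly_coeff n c 0"
  unfolding bezout_entry_def by simp

lemma bezout_entry_first_col:
  "bezout_entry n c v i 0 = comp_poly_coeff n c (Suc i) * v 0 - comp_poly_coeff n c 0 * v (Suc i)"
proof -
  have "(\<Sum>k\<le>Suc i. comp_poly_coeff n c (Suc i - k) * v k) = (\<Sum>k\<le>Suc i. v (Suc i - k) * comp_poly_coeff n c k)"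
    using sum_mult_reflect[of "\<lambda>k. v k" "comp_poly_coeff n c" 0 "Suc i"]
    by (simp add: atMost_atLeast0 mult.commute)
  then show ?thesis
    unfolding bezout_entry_def by (simp add: sum_subtractf sum.atMost_Suc algebra_simps)
qed

lemma bezout_entry_shift:
  "(if j \<ge> 1 then bezout_entry n c v i (j-1) else 0) - v i * comp_poly_coeff n c j
    = (if i \<ge> 1 then bezout_entry n c v (i-1) j else 0) - comp_poly_coeff n c i * v j"
proof (cases i; cases j)
  fix i' j' assume "i = Suc i'" "j = Suc j'"
  then show ?thesis by (simp add: bezout_entry_Suc_row algebra_simps)
qed (simp_all add: bezout_entry_first_row bezout_entry_first_col)

lemma sum_mult_comp_mat_col:
  fixes f :: "nat \<Rightarrow> real"
  assumes l: "l < n"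
  shows "(\<Sum>j<n. f j * (if j = n-1 then A else if l = j+1 then 1 else 0))
       = f (n-1) * A + (if l \<ge> 1 then f (l-1) else 0)"
proof -
  obtain n' where n': "n = Suc n'" using l by (cases n) auto
  have "(\<Sum>j<n'. f j * (if j = n-1 then A else if l = j+1 then 1 else 0))
      = (\<Sum>j<n'. if j = l - 1 then (if l \<ge> 1 then f j else 0) else 0)"
    using l n' by (intro sum.cong) auto
  also have "\<dots> = (if l \<ge> 1 then f (l-1) else 0)"
    using l n' by (auto simp: sum.delta')
  finally show ?thesis unfolding n' by (simp add: sum.lessThan_Suc)
qed

lemma comp_mat_entry:
  assumes "i < n" "j < n"
  shows "comp_mat n c $$ (i,j) = (if i = n-1 then - comp_poly_coeff n c j else if j = i+1 then 1 else 0)"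
  using assms unfolding comp_mat_def comp_poly_coeff_def by auto

lemma bezout_entry_comp_mat_commute:
  assumes v: "\<And>l. l \<ge> n \<Longrightarrow> v l = 0" and i: "i < n" and l: "l < n"
  shows "(\<Sum>j<n. bezout_entry n c v i j * comp_mat n c $$ (j,l)) = (\<Sum>m<n. comp_mat n c $$ (m,i) * bezout_entry n c v m l)"
proof -
  have "(\<Sum>j<n. bezout_entry n c v i j * comp_mat n c $$ (j,l))
      = (\<Sum>j<n. bezout_entry n c v i j * (if j = n-1 then - comp_poly_coeff n c l else if l = j+1 then 1 else 0))"
    using l by (intro sum.cong) (auto simp: comp_mat_entry)
  also have "\<dots> = bezout_entry n c v i (n-1) * (- comp_poly_coeff n c l) + (if l \<ge> 1 then bezout_entry n c v i (l-1) else 0)"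
    by (rule sum_mult_comp_mat_col[OF l])
  also have "\<dots> = (if l \<ge> 1 then bezout_entry n c v i (l-1) else 0) - v i * comp_poly_coeff n c l"
    using bezout_entry_last_col[OF v i] by simp
  also have "\<dots> = (if i \<ge> 1 then bezout_entry n c v (i-1) l else 0) - comp_poly_coeff n c i * v l"
    by (rule bezout_entry_shift)
  also have "\<dots> = bezout_entry n c v (n-1) l * (- comp_poly_coeff n c i) + (if i \<ge> 1 then bezout_entry n c v (i-1) l else 0)"
    using bezout_entry_last_row[OF v l] by simp
  also have "\<dots> = (\<Sum>m<n. bezout_entry n c v m l * (if m = n-1 then - comp_poly_coeff n c i else if i = m+1 then 1 else 0))"
    by (rule sum_mult_comp_mat_col[OF i, symmetric])
  also have "\<dots> = (\<Sum>m<n. comp_mat n c $$ (m,i) * bezout_entry n c v m l)"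
    using i by (intro sum.cong) (auto simp: comp_mat_entry)
  finally show ?thesis .
qed

lemma solves_ode_iff_components:
  assumes M: "M \<in> carrier_mat n n" and f: "\<forall>s\<in>{0..T}. f s \<in> carrier_vec n"
  shows "solves_ode T M f z0 z \<longleftrightarrow> (\<forall>t\<in>{0..T}. z t \<in> carrier_vec n) \<and> (\<forall>t\<in>{0..T}. \<forall>i<n.
     ((\<lambda>s. (\<Sum>l<n. M $$ (i,l) * z s $ l) + f s $ i) has_integral z t $ i - z0 $ i) {0..t})"
    (is "_ \<longleftrightarrow> _ \<and> ?rhs")
proof -
  have integrand: "((\<lambda>s. (M *\<^sub>v z s + f s) $ i) has_integral v) {0..t}
      \<longleftrightarrow> ((\<lambda>s. (\<Sum>l<n. M $$ (i,l) * z s $ l) + f s $ i) has_integral v) {0..t}"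
    if z: "\<forall>s\<in>{0..T}. z s \<in> carrier_vec n" and t: "t \<in> {0..T}" and i: "i < n" for t i v
  proof (rule has_integral_cong)
    fix s assume "s \<in> {0..t}"
    then have "s \<in> {0..T}" using t by auto
    then have "z s \<in> carrier_vec n" "f s \<in> carrier_vec n" using z f by auto
    then show "(M *\<^sub>v z s + f s) $ i = (\<Sum>l<n. M $$ (i,l) * z s $ l) + f s $ i"
      using M i mult_mat_vec_entry[OF M, of "z s" i] by simp
  qed
  have "solves_ode T M f z0 z \<longleftrightarrow> (\<forall>t\<in>{0..T}. z t \<in> carrier_vec n) \<and> (\<forall>t\<in>{0..T}. \<forall>i<n.
     ((\<lambda>s. (M *\<^sub>v z s + f s) $ i) has_integral z t $ i - z0 $ i) {0..t})"
    using M unfolding solves_ode_def carrier_vec_def by auto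
  also have "\<dots> \<longleftrightarrow> (\<forall>t\<in>{0..T}. z t \<in> carrier_vec n) \<and> ?rhs"
  proof (rule conj_cong[OF refl])
    assume "\<forall>t\<in>{0..T}. z t \<in> carrier_vec n"
    then show "(\<forall>t\<in>{0..T}. \<forall>i<n. ((\<lambda>s. (M *\<^sub>v z s + f s) $ i) has_integral z t $ i - z0 $ i) {0..t})
      \<longleftrightarrow> ?rhs"
      using integrand by simp
  qed
  finally show ?thesis .
qed

lemma solves_ode_unique:
  assumes M: "M \<in> carrier_mat n n" and f: "\<forall>s\<in>{0..T}. f s \<in> carrier_vec n"
    and z1: "solves_ode T M f z0 z1" and z2: "solves_ode T M f z0 z2" and t: "t \<in> {0..T}"
  shows "z1 t = z2 t"
proof -
  note z1 = solves_ode_iff_components[OF M f, THEN iffD1, OF z1]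
  note z2 = solves_ode_iff_components[OF M f, THEN iffD1, OF z2]
  define D where "D i s = z1 s $ i - z2 s $ i" for i s
  have D: "((\<lambda>s. \<Sum>j<n. M $$ (i,j) * D j s) has_integral D i t) {0..t}" if "t \<in> {0..T}" "i < n" for t i
    using has_integral_diff[OF z1[THEN conjunct2, rule_format, OF that] z2[THEN conjunct2, rule_format, OF that]]
    by (simp add: D_def right_diff_distrib sum_subtractf)
  have "D i t = 0" if "i < n" for i
    by (rule linear_integral_equation_zero_solution[OF D t that])
  moreover have "z1 t \<in> carrier_vec n" "z2 t \<in> carrier_vec n" using z1 z2 t by auto
  ultimately show ?thesis by (intro eq_vecI) (auto simp: D_def)
qed

lemma mat_exp_solves_ode:
  assumes M: "(M::real mat) \<in> carrier_mat n n" and x0: "x0 \<in> carrier_vec n"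
  shows "solves_ode T M (\<lambda>_. 0\<^sub>v n) x0 (\<lambda>t. mat_exp M t *\<^sub>v x0)"
  unfolding solves_ode_iff_components[OF M, of T "\<lambda>_. 0\<^sub>v n", simplified]
proof (intro conjI ballI allI impI)
  fix t assume "t \<in> {0..T}"
  show "mat_exp M t *\<^sub>v x0 \<in> carrier_vec n"
    using mat_exp_carrier[OF M] x0 by (rule mult_mat_vec_carrier)
next
  fix t i assume t: "t \<in> {0..T}" and i: "i < n"
  have "((\<lambda>s. \<Sum>l<n. M $$ (i,l) * (mat_exp M s *\<^sub>v x0) $ l) has_integral
      (mat_exp M t *\<^sub>v x0) $ i - (mat_exp M 0 *\<^sub>v x0) $ i) {0..t}"
  proof (rule fundamental_theorem_of_calculus)
    show "((\<lambda>s. (mat_exp M s *\<^sub>v x0) $ i) has_vector_derivative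
        (\<Sum>l<n. M $$ (i,l) * (mat_exp M s *\<^sub>v x0) $ l)) (at s within {0..t})" for s
      using mat_exp_mult_vec_has_real_derivative[OF M x0 i]
      by (simp add: has_real_derivative_iff_has_vector_derivative has_vector_derivative_at_within)
  qed (use t in auto)
  then show "((\<lambda>s. \<Sum>l<n. M $$ (i,l) * (mat_exp M s *\<^sub>v x0) $ l)
      has_integral (mat_exp M t *\<^sub>v x0) $ i - x0 $ i) {0..t}"
    using i by (simp add: mat_exp_0_mult_vec[OF M x0])
qed

lemma full_row_rank_mult_vec_surj:
  fixes M :: "real mat"
  assumes M: "M \<in> carrier_mat m k" and r: "vec_space.rank m M = m" and y: "y \<in> carrier_vec m"
  shows "\<exists>x\<in>carrier_vec k. M *\<^sub>v x = y"
proof -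
  interpret V: vec_space "TYPE(real)" m .
  obtain S where S: "maximal S (\<lambda>T. T \<subseteq> set (cols M) \<and> V.lin_indpt T)"
    using maximal_exists[of "\<lambda>T. T \<subseteq> set (cols M) \<and> V.lin_indpt T" "card (set (cols M))" "{}"]
    by (meson List.finite_set card_mono empty_iff empty_subsetI V.finite_lin_indpt2 rev_finite_subset)
  have Ssub: "S \<subseteq> set (cols M)" and li: "V.lin_indpt S" using S unfolding maximal_def by auto
  have "finite S" using Ssub finite_subset by blast
  moreover have "S \<subseteq> carrier_vec m" using Ssub M cols_dim by blast
  moreover have "card S = m" using V.rank_card_indpt[OF M S] r by simp
  ultimately have "V.basis S" using li V.dim_is_n by (intro V.dim_li_is_basis) auto
  then have "y \<in> V.span (set (cols M))"
    using V.span_is_monotone[OF Ssub] y unfolding V.basis_def by auto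
  then show ?thesis using V.col_space_eq[OF M] M unfolding V.col_space_def by auto
qed

lemma scalar_prod_self_eq_0:
  fixes v :: "real Matrix.vec"
  assumes "v \<bullet> v = 0"
  shows "v = 0\<^sub>v (dim_vec v)"
proof (rule eq_vecI)
  fix i assume i: "i < dim_vec (0\<^sub>v (dim_vec v))"
  have "(\<Sum>j\<in>{0..<dim_vec v}. v $ j * v $ j) = 0" using assms unfolding scalar_prod_def by simp
  then have "\<forall>j\<in>{0..<dim_vec v}. v $ j * v $ j = 0"
    by (subst sum_nonneg_eq_0_iff[symmetric]) auto
  then show "v $ i = 0\<^sub>v (dim_vec v) $ i" using i by auto
qed simp

text \<open>If \<open>M M\<^sup>T v = 0\<close> then \<open>M\<^sup>T v = 0\<close>, so \<open>v\<close> is orthogonal to the column space of \<open>M\<close>,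
  which is everything.\<close>

lemma full_row_rank_gram_det_nonzero:
  fixes M :: "real mat"
  assumes M: "M \<in> carrier_mat m k" and r: "vec_space.rank m M = m"
  shows "Determinant.det (M * transpose_mat M) \<noteq> 0"
proof -
  have MT: "transpose_mat M \<in> carrier_mat k m" using M by simp
  have "v = 0\<^sub>v m" if v: "v \<in> carrier_vec m" and Gv: "(M * transpose_mat M) *\<^sub>v v = 0\<^sub>v m" for v
  proof -
    have "(transpose_mat M *\<^sub>v v) \<bullet> (transpose_mat M *\<^sub>v v) = v \<bullet> (M *\<^sub>v (transpose_mat M *\<^sub>v v))"
      by (rule transpose_vec_mult_scalar[OF M _ v]) (use MT v in auto)
    also have "\<dots> = v \<bullet> ((M * transpose_mat M) *\<^sub>v v)" using M MT v by simp
    also have "\<dots> = 0" using Gv v by simp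
    finally have MTv: "transpose_mat M *\<^sub>v v = 0\<^sub>v k"
      using scalar_prod_self_eq_0 MT by fastforce
    obtain x where x: "x \<in> carrier_vec k" "M *\<^sub>v x = v" using full_row_rank_mult_vec_surj[OF M r v] by blast
    have "v \<bullet> v = (transpose_mat M *\<^sub>v v) \<bullet> x"
      using transpose_vec_mult_scalar[OF M x(1) v] x(2) by simp
    also have "\<dots> = 0" using MTv x by simp
    finally show ?thesis using scalar_prod_self_eq_0[of v] v by simp
  qed
  then show ?thesis
    using det_0_iff_vec_prod_zero_field[of "M * transpose_mat M" m] M by auto
qed

text \<open>A right inverse that makes \<open>P M\<close> symmetric satisfies all four Penrose conditions,
  and any other pseudoinverse \<open>Q\<close> must agree with it: \<open>P M = Q M\<close> and then \<open>Q = Q M P = P\<close>.\<close>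

lemma pinv_eqI_right_inverse:
  fixes M P :: "real mat"
  assumes M: "M \<in> carrier_mat m k" and P: "P \<in> carrier_mat k m"
    and MP: "M * P = 1\<^sub>m m" and PM: "transpose_mat (P * M) = P * M"
  shows "pinv M = P"
  unfolding pinv_def
proof (rule the_equality)
  show "is_pinv M P" unfolding is_pinv_def using M P MP PM by simp
  fix Q assume "is_pinv M Q"
  then have Q: "Q \<in> carrier_mat k m" and MQM: "M * Q * M = M" and QM: "transpose_mat (Q * M) = Q * M"
    using M unfolding is_pinv_def by auto
  have "P * M = transpose_mat M * transpose_mat P"
    using transpose_mult[OF P M] PM by simp
  also have "transpose_mat M = transpose_mat (Q * M) * transpose_mat M"
    using transpose_mult[OF M, of "Q * M" k] Q M MQM by (simp add: assoc_mult_mat[OF M Q M])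
  also have "\<dots> * transpose_mat P = (Q * M) * (transpose_mat M * transpose_mat P)"
    unfolding QM using Q M P by (intro assoc_mult_mat[of _ k k _ m _ k]) auto
  also have "transpose_mat M * transpose_mat P = P * M"
    using transpose_mult[OF P M] PM by simp
  also have "(Q * M) * (P * M) = Q * ((M * P) * M)"
    using Q M P by (simp add: assoc_mult_mat[of _ k m _ k _ k] assoc_mult_mat[of M m k P m _ k])
  also have "\<dots> = Q * M" using MP M by simp
  finally have PMQM: "P * M = Q * M" .
  have "Q = (Q * M) * P" using MP Q M P by simp
  also have "\<dots> = P" unfolding PMQM[symmetric] using MP P M by simp
  finally show "Q = P" .
qed

lemma pinv_full_row_rank:
  fixes M :: "real mat"
  assumes M: "M \<in> carrier_mat m k" and r: "vec_space.rank m M = m"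
  shows "pinv M \<in> carrier_mat k m" and "M * pinv M = 1\<^sub>m m"
proof -
  define G where "G = M * transpose_mat M"
  have G: "G \<in> carrier_mat m m" and GT: "transpose_mat G = G"
    unfolding G_def using M by (auto simp: transpose_mult[OF M])
  obtain Gi where Gi: "mat_inverse G = Some Gi"
    using full_row_rank_gram_det_nonzero[OF M r] mat_inverse(1)[OF G] det_non_zero_imp_unit[OF G]
    unfolding G_def by (metis option.exhaust)
  have Gic: "Gi \<in> carrier_mat m m" and GGi: "G * Gi = 1\<^sub>m m"
    using mat_inverse(2)[OF G Gi] by auto
  have GiT: "transpose_mat Gi = Gi"
  proof -
    have GiTG: "transpose_mat Gi * G = 1\<^sub>m m"
      using arg_cong[OF GGi, of transpose_mat] transpose_mult[OF G Gic] GT by simp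
    have "transpose_mat Gi = transpose_mat Gi * (G * Gi)" using GGi Gic by simp
    also have "\<dots> = (transpose_mat Gi * G) * Gi" using Gic G by simp
    also have "\<dots> = Gi" using GiTG Gic by simp
    finally show ?thesis .
  qed
  define P where "P = transpose_mat M * Gi"
  have P: "P \<in> carrier_mat k m" unfolding P_def using M Gic by auto
  have MP: "M * P = 1\<^sub>m m" unfolding P_def using M Gic GGi unfolding G_def by simp
  have "transpose_mat (P * M) = P * M"
    unfolding P_def using M Gic GiT by (simp add: transpose_mult[of _ k m _ k] transpose_mult[of _ m m _ k])
  then have "pinv M = P" by (rule pinv_eqI_right_inverse[OF M P MP])
  then show "pinv M \<in> carrier_mat k m" and "M * pinv M = 1\<^sub>m m" using P MP by simp_all
qed

lemma mult_pinv_cancel_full_row_rank: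
  fixes A M :: "real mat"
  assumes A: "A \<in> carrier_mat p m" and M: "M \<in> carrier_mat m k" and r: "vec_space.rank m M = m"
  shows "A * M * pinv M = A"
  using A M pinv_full_row_rank[OF M r] by (simp add: assoc_mult_mat[OF A M])

lemma left_factor_eq_mult_pinv:
  fixes A \<Phi> E W :: "real mat"
  assumes A: "A \<in> carrier_mat m k" and \<Phi>: "\<Phi> \<in> carrier_mat k N" and E: "E \<in> carrier_mat m N"
    and W: "W \<in> carrier_mat N p" and EW: "E * W = 0\<^sub>m m p" and r: "vec_space.rank k (\<Phi> * W) = k"
  shows "A = ((A * \<Phi> + E) * W) * pinv (\<Phi> * W)"
proof -
  have "(A * \<Phi> + E) * W = A * \<Phi> * W + E * W"
    using A \<Phi> E W by (intro add_mult_distrib_mat) auto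
  also have "\<dots> = A * (\<Phi> * W)"
    using A \<Phi> W EW by (simp add: assoc_mult_mat[OF A \<Phi> W])
  finally show ?thesis
    using mult_pinv_cancel_full_row_rank[OF A mult_carrier_mat[OF \<Phi> W] r] by simp
qed

lemma append_rows_mult:
  fixes A B W :: "real mat"
  assumes A: "A \<in> carrier_mat m1 k" and B: "B \<in> carrier_mat m2 k" and W: "W \<in> carrier_mat k p"
  shows "(A @\<^sub>r B) * W = (A * W) @\<^sub>r (B * W)"
proof -
  have AB: "A @\<^sub>r B \<in> carrier_mat (m1 + m2) k" and AWBW: "(A * W) @\<^sub>r (B * W) \<in> carrier_mat (m1 + m2) p"
    using A B W by auto
  show ?thesis
  proof (rule eq_matI)
    fix i j assume "i < dim_row ((A * W) @\<^sub>r (B * W))" and "j < dim_col ((A * W) @\<^sub>r (B * W))"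
    then have i: "i < m1 + m2" and j: "j < p" using AWBW by auto
    have "Matrix.row (A @\<^sub>r B) i = (if i < m1 then Matrix.row A i else Matrix.row B (i - m1))"
      using A B i by (intro eq_vecI) (auto simp: append_rows_def)
    then show "((A @\<^sub>r B) * W) $$ (i, j) = ((A * W) @\<^sub>r (B * W)) $$ (i, j)"
      using A B W AB i j by (auto simp: append_rows_def)
  qed (use AB AWBW W in auto)
qed

lemma sample_mat_carrier: "sample_mat m N ts g \<in> carrier_mat m N"
  unfolding sample_mat_def by simp

lemma sample_mat_cong:
  assumes "\<And>j. j < N \<Longrightarrow> f (ts (Suc j)) = g (ts (Suc j))"
  shows "sample_mat m N ts f = sample_mat m N ts g"
  using assms unfolding sample_mat_def by (intro eq_matI) auto

lemma sample_mat_add: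
  assumes g: "\<And>j. j < N \<Longrightarrow> g (ts (Suc j)) \<in> carrier_vec m"
  shows "sample_mat m N ts (\<lambda>t. f t + g t) = sample_mat m N ts f + sample_mat m N ts g"
proof (rule eq_matI)
  fix i j assume "i < dim_row (sample_mat m N ts f + sample_mat m N ts g)"
    and "j < dim_col (sample_mat m N ts f + sample_mat m N ts g)"
  then have i: "i < m" and j: "j < N" by (simp_all add: sample_mat_def)
  then show "sample_mat m N ts (\<lambda>t. f t + g t) $$ (i, j) = (sample_mat m N ts f + sample_mat m N ts g) $$ (i, j)"
    using g[OF j] by (simp add: sample_mat_def)
qed (simp_all add: sample_mat_def)

lemma sample_mat_mult_mat_vec:
  assumes A: "A \<in> carrier_mat m k" and g: "\<And>j. j < N \<Longrightarrow> g (ts (Suc j)) \<in> carrier_vec k"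
  shows "sample_mat m N ts (\<lambda>t. A *\<^sub>v g t) = A * sample_mat k N ts g"
proof (rule eq_matI)
  fix i j assume "i < dim_row (A * sample_mat k N ts g)" "j < dim_col (A * sample_mat k N ts g)"
  then have i: "i < m" and j: "j < N" using A by (auto simp: sample_mat_def)
  have "col (sample_mat k N ts g) j = g (ts (Suc j))"
    using g[OF j] j by (intro eq_vecI) (auto simp: sample_mat_def)
  then show "sample_mat m N ts (\<lambda>t. A *\<^sub>v g t) $$ (i, j) = (A * sample_mat k N ts g) $$ (i, j)"
    using A i j by (simp add: sample_mat_def)
qed (use A in \<open>auto simp: sample_mat_def\<close>)

lemma sample_mat_append_vec:
  assumes f: "\<And>j. j < N \<Longrightarrow> f (ts (Suc j)) \<in> carrier_vec m1"
    and g: "\<And>j. j < N \<Longrightarrow> g (ts (Suc j)) \<in> carrier_vec m2"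
  shows "sample_mat (m1 + m2) N ts (\<lambda>t. f t @\<^sub>v g t) = sample_mat m1 N ts f @\<^sub>r sample_mat m2 N ts g"
proof (rule eq_matI)
  fix i j assume "i < dim_row (sample_mat m1 N ts f @\<^sub>r sample_mat m2 N ts g)"
    and "j < dim_col (sample_mat m1 N ts f @\<^sub>r sample_mat m2 N ts g)"
  then have i: "i < m1 + m2" and j: "j < N" by (auto simp: sample_mat_def append_rows_def)
  then show "sample_mat (m1 + m2) N ts (\<lambda>t. f t @\<^sub>v g t) $$ (i, j)
      = (sample_mat m1 N ts f @\<^sub>r sample_mat m2 N ts g) $$ (i, j)"
    using f[OF j] g[OF j] by (auto simp: sample_mat_def append_rows_def)
qed (auto simp: sample_mat_def append_rows_def)

lemma comp_mat_carrier: "comp_mat n c \<in> carrier_mat n n"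
  unfolding comp_mat_def by auto

lemma transpose_shift_invertible:
  fixes C :: "real mat"
  assumes C: "C \<in> carrier_mat n n" and ev: "\<not> eigenvalue C (- \<beta>)"
  obtains Ni where "mat_inverse (transpose_mat C + \<beta> \<cdot>\<^sub>m 1\<^sub>m n) = Some Ni"
proof -
  define X where "X = transpose_mat C + \<beta> \<cdot>\<^sub>m 1\<^sub>m n"
  have X: "X \<in> carrier_mat n n" unfolding X_def using C by auto
  have XT: "transpose_mat X = C + \<beta> \<cdot>\<^sub>m 1\<^sub>m n"
    unfolding X_def using C by (intro eq_matI) auto
  have "Determinant.det X \<noteq> 0"
  proof
    assume "Determinant.det X = 0"
    then obtain v where v: "v \<in> carrier_vec n" "v \<noteq> 0\<^sub>v n" "transpose_mat X *\<^sub>v v = 0\<^sub>v n"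
      using det_0_iff_vec_prod_zero_field[of "transpose_mat X" n] X by (auto simp: Determinant.det_transpose[OF X])
    have "C *\<^sub>v v = (- \<beta>) \<cdot>\<^sub>v v"
    proof (rule eq_vecI)
      fix i assume "i < dim_vec ((- \<beta>) \<cdot>\<^sub>v v)"
      then have i: "i < n" using v by simp
      have "(transpose_mat X *\<^sub>v v) $ i = (C *\<^sub>v v) $ i + \<beta> * v $ i"
        unfolding XT using C v i by (simp add: add_mult_distrib_mat_vec[of C n n "\<beta> \<cdot>\<^sub>m 1\<^sub>m n" v])
      then show "(C *\<^sub>v v) $ i = ((- \<beta>) \<cdot>\<^sub>v v) $ i" using v i by simp
    qed (use C v in simp)
    then show False using ev v C unfolding eigenvalue_def eigenvector_def by auto
  qed
  then show ?thesis
    using that mat_inverse(1)[OF X] det_non_zero_imp_unit[OF X] unfolding X_def by (metis option.exhaust)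
qed

lemma sum_smult_one_mat:
  assumes "k < m"
  shows "(\<Sum>l<m. (r \<cdot>\<^sub>m 1\<^sub>m m) $$ (k,l) * v l) = r * (v k :: real)"
proof -
  have "(\<Sum>l<m. (r \<cdot>\<^sub>m 1\<^sub>m m) $$ (k,l) * v l) = (\<Sum>l<m. if l = k then r * v k else 0)"
    using assms by (intro sum.cong) auto
  then show ?thesis using assms by simp
qed

lemma smult_one_mat_mult_vec:
  assumes "(v :: real Matrix.vec) \<in> carrier_vec n"
  shows "(r \<cdot>\<^sub>m 1\<^sub>m n) *\<^sub>v v = r \<cdot>\<^sub>v v"
proof (rule eq_vecI)
  fix i assume "i < dim_vec (r \<cdot>\<^sub>v v)"
  then have i: "i < n" using assms by simp
  show "((r \<cdot>\<^sub>m 1\<^sub>m n) *\<^sub>v v) $ i = (r \<cdot>\<^sub>v v) $ i"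
    using mult_mat_vec_entry[of "r \<cdot>\<^sub>m 1\<^sub>m n" n n v i] sum_smult_one_mat[OF i, of r "\<lambda>l. v $ l"] assms i
    by simp
qed (use assms in simp)

lemma G_f_mult_vec_entry:
  assumes n1: "n \<ge> 1" and w: "w \<in> carrier_vec n" and r: "r < 2 * n"
  shows "(G_f n *\<^sub>v w) $ r = (if r = 2*n-1 then w $ (n-1) else 0)"
proof -
  have "(G_f n *\<^sub>v w) $ r = (\<Sum>l<n. G_f n $$ (r,l) * w $ l)"
    by (rule mult_mat_vec_entry[OF _ w r]) (simp add: G_f_def)
  also have "\<dots> = (\<Sum>l<n. if l = n-1 then (if r = 2*n-1 then w $ l else 0) else 0)"
    using r by (intro sum.cong refl) (auto simp: G_f_def)
  finally show ?thesis using n1 by (simp add: sum.delta')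
qed

lemma eps_eq_resolvent:
  assumes x0: "x0 \<in> carrier_vec n"
    and Ni: "mat_inverse (transpose_mat (comp_mat n c) + \<beta> \<cdot>\<^sub>m 1\<^sub>m n) = Some Ni"
  shows "eps n c \<beta> x0 t = G_f n *\<^sub>v (Ni *\<^sub>v
     (mat_exp (transpose_mat (comp_mat n c)) t *\<^sub>v x0 - exp (- \<beta> * t) \<cdot>\<^sub>v x0))"
proof -
  have E: "mat_exp (transpose_mat (comp_mat n c)) t \<in> carrier_mat n n"
    by (rule mat_exp_carrier) (simp add: comp_mat_carrier)
  have "(mat_exp (transpose_mat (comp_mat n c)) t - exp (- \<beta> * t) \<cdot>\<^sub>m 1\<^sub>m n) *\<^sub>v x0
      = mat_exp (transpose_mat (comp_mat n c)) t *\<^sub>v x0 - exp (- \<beta> * t) \<cdot>\<^sub>v x0"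
    using E x0 by (simp add: minus_mult_distrib_mat_vec[of _ n n] smult_one_mat_mult_vec)
  then show ?thesis unfolding eps_def Gamma_star_def Ni option.sel
    using x0 E mat_inverse(2)[OF _ Ni] comp_mat_carrier[of n c]
    by (subst assoc_mult_mat_vec[of _ "2*n" n _ n]) (auto simp: G_f_def)
qed

lemma left_inverse_mult_vec_entry:
  fixes Ni X :: "real mat"
  assumes Ni: "Ni \<in> carrier_mat n n" and X: "X \<in> carrier_mat n n" and NiX: "Ni * X = 1\<^sub>m n"
    and w: "w \<in> carrier_vec n" and i: "i < n"
  shows "(\<Sum>j<n. Ni $$ (i,j) * (X *\<^sub>v w) $ j) = w $ i"
proof -
  have "(\<Sum>j<n. Ni $$ (i,j) * (X *\<^sub>v w) $ j) = (Ni *\<^sub>v (X *\<^sub>v w)) $ i"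
    by (rule mult_mat_vec_entry[OF Ni mult_mat_vec_carrier[OF X w] i, symmetric])
  also have "\<dots> = ((Ni * X) *\<^sub>v w) $ i" by (simp add: assoc_mult_mat_vec[OF Ni X w])
  finally show ?thesis using NiX w i by simp
qed

text \<open>For \<open>r(s) = X\<^sup>-\<^sup>1 (e\<^bsup>M s\<^esup> x\<^sub>0 - e\<^bsup>-\<beta> s\<^esup> x\<^sub>0)\<close> with \<open>X = M + \<beta> I\<close>:
  \<open>r' = X\<^sup>-\<^sup>1 (M e\<^bsup>M s\<^esup> x\<^sub>0 + \<beta> e\<^bsup>-\<beta> s\<^esup> x\<^sub>0) = e\<^bsup>M s\<^esup> x\<^sub>0 - \<beta> r\<close>.\<close>

lemma resolvent_has_real_derivative:
  fixes M Ni :: "real mat"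
  assumes M: "M \<in> carrier_mat n n" and x0: "x0 \<in> carrier_vec n"
    and Ni: "Ni \<in> carrier_mat n n" and NiX: "Ni * (M + \<beta> \<cdot>\<^sub>m 1\<^sub>m n) = 1\<^sub>m n" and i: "i < n"
  defines "r s \<equiv> Ni *\<^sub>v (mat_exp M s *\<^sub>v x0 - exp (- \<beta> * s) \<cdot>\<^sub>v x0)"
  shows "((\<lambda>s. r s $ i) has_real_derivative (mat_exp M s *\<^sub>v x0) $ i - \<beta> * r s $ i) (at s)"
proof -
  define w where "w s = mat_exp M s *\<^sub>v x0" for s
  have w: "w s \<in> carrier_vec n" for s
    unfolding w_def using mat_exp_carrier[OF M] x0 by (rule mult_mat_vec_carrier)
  have r: "r s $ i = (\<Sum>j<n. Ni $$ (i,j) * (w s $ j - exp (- \<beta> * s) * x0 $ j))" for s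
    unfolding r_def w_def[symmetric] using Ni w x0 i
      mult_mat_vec_entry[OF Ni, of "w s - exp (- \<beta> * s) \<cdot>\<^sub>v x0" i] by simp
  have "((\<lambda>s. r s $ i) has_real_derivative
      (\<Sum>j<n. Ni $$ (i,j) * ((\<Sum>l<n. M $$ (j,l) * w s $ l) - exp (- \<beta> * s) * (- \<beta>) * x0 $ j))) (at s)"
    unfolding r w_def
    by (rule DERIV_sum, rule DERIV_cmult, rule DERIV_diff, rule mat_exp_mult_vec_has_real_derivative[OF M x0])
       (auto intro!: derivative_eq_intros)
  moreover have "(\<Sum>j<n. Ni $$ (i,j) * ((\<Sum>l<n. M $$ (j,l) * w s $ l) - exp (- \<beta> * s) * (- \<beta>) * x0 $ j))
      = (\<Sum>j<n. Ni $$ (i,j) * ((M + \<beta> \<cdot>\<^sub>m 1\<^sub>m n) *\<^sub>v w s) $ j) - \<beta> * r s $ i"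
  proof -
    have MX: "((M + \<beta> \<cdot>\<^sub>m 1\<^sub>m n) *\<^sub>v w s) $ j = (\<Sum>l<n. M $$ (j,l) * w s $ l) + \<beta> * w s $ j"
      if "j < n" for j
      using M w[of s] that mult_mat_vec_entry[OF M w that] smult_one_mat_mult_vec[OF w, of \<beta>]
      by (simp add: add_mult_distrib_mat_vec[OF M _ w])
    have "(\<Sum>j<n. Ni $$ (i,j) * ((M + \<beta> \<cdot>\<^sub>m 1\<^sub>m n) *\<^sub>v w s) $ j) - \<beta> * r s $ i
        = (\<Sum>j<n. Ni $$ (i,j) * ((M + \<beta> \<cdot>\<^sub>m 1\<^sub>m n) *\<^sub>v w s) $ j
            - \<beta> * (Ni $$ (i,j) * (w s $ j - exp (- \<beta> * s) * x0 $ j)))"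
      by (simp add: r sum_subtractf sum_distrib_left)
    also have "\<dots> = (\<Sum>j<n. Ni $$ (i,j) * ((\<Sum>l<n. M $$ (j,l) * w s $ l) - exp (- \<beta> * s) * (- \<beta>) * x0 $ j))"
      by (intro sum.cong refl) (use MX in \<open>simp add: algebra_simps\<close>)
    finally show ?thesis by simp
  qed
  moreover have "(\<Sum>j<n. Ni $$ (i,j) * ((M + \<beta> \<cdot>\<^sub>m 1\<^sub>m n) *\<^sub>v w s) $ j) = w s $ i"
    using M by (intro left_inverse_mult_vec_entry[OF Ni _ NiX w i]) simp
  ultimately show ?thesis unfolding w_def by simp
qed

lemma eps_last_integral:
  assumes n1: "n \<ge> 1" and x0: "x0 \<in> carrier_vec n" and A2: "\<not> eigenvalue (comp_mat n c) (- \<beta>)"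
    and t: "0 \<le> t"
  shows "((\<lambda>s. (mat_exp (transpose_mat (comp_mat n c)) s *\<^sub>v x0) $ (n-1) - \<beta> * eps n c \<beta> x0 s $ (2*n-1))
     has_integral eps n c \<beta> x0 t $ (2*n-1)) {0..t}"
proof -
  define MT where "MT = transpose_mat (comp_mat n c)"
  have MT: "MT \<in> carrier_mat n n" unfolding MT_def using comp_mat_carrier by auto
  obtain Ni where Ni: "mat_inverse (MT + \<beta> \<cdot>\<^sub>m 1\<^sub>m n) = Some Ni"
    using transpose_shift_invertible[OF comp_mat_carrier A2] unfolding MT_def by blast
  have Nic: "Ni \<in> carrier_mat n n" and NiX: "Ni * (MT + \<beta> \<cdot>\<^sub>m 1\<^sub>m n) = 1\<^sub>m n"
    using mat_inverse(2)[OF _ Ni] MT by auto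
  define r where "r s = Ni *\<^sub>v (mat_exp MT s *\<^sub>v x0 - exp (- \<beta> * s) \<cdot>\<^sub>v x0)" for s
  have r: "r s \<in> carrier_vec n" for s
  proof -
    have "mat_exp MT s *\<^sub>v x0 \<in> carrier_vec n" using mat_exp_carrier[OF MT] x0 by (rule mult_mat_vec_carrier)
    then show ?thesis unfolding r_def using Nic x0 by (intro mult_mat_vec_carrier[OF Nic]) simp
  qed
  have eps: "eps n c \<beta> x0 s $ (2*n-1) = r s $ (n-1)" for s
    using eps_eq_resolvent[OF x0 Ni[unfolded MT_def]] G_f_mult_vec_entry[OF n1 r] n1
    unfolding r_def MT_def by simp
  have "((\<lambda>s. (mat_exp MT s *\<^sub>v x0) $ (n-1) - \<beta> * r s $ (n-1)) has_integral r t $ (n-1) - r 0 $ (n-1)) {0..t}"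
  proof (rule fundamental_theorem_of_calculus[OF t])
    show "((\<lambda>s. r s $ (n-1)) has_vector_derivative (mat_exp MT s *\<^sub>v x0) $ (n-1) - \<beta> * r s $ (n-1))
        (at s within {0..t})" for s
      using resolvent_has_real_derivative[OF MT x0 Nic NiX, of "n-1" s] n1 unfolding r_def
      by (simp add: has_real_derivative_iff_has_vector_derivative has_vector_derivative_at_within)
  qed
  moreover have "r 0 = 0\<^sub>v n"
    unfolding r_def using mat_exp_0_mult_vec[OF MT x0] Nic x0 by auto
  ultimately show ?thesis using n1 unfolding eps MT_def by simp
qed

lemma plant_A_carrier: "plant_A n a \<in> carrier_mat n n"
  unfolding plant_A_def by simp

lemma plant_A_entry:
  assumes "i < n" "l < n"
  shows "plant_A n a $$ (i,l) = (if l = n-1 then - a (n-i) else if i = l+1 then 1 else 0)"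
  using assms unfolding plant_A_def by auto

text \<open>\<open>rev_coeffs n f l\<close> is the coefficient of \<open>s\<^sup>l\<close> in \<open>f\<^sub>1 s\<^sup>n\<^sup>-\<^sup>1 + \<dots> + f\<^sub>n\<close>.\<close>

definition rev_coeffs :: "nat \<Rightarrow> (nat \<Rightarrow> real) \<Rightarrow> nat \<Rightarrow> real" where
  "rev_coeffs n f l = (if l < n then f (n - l) else 0)"

lemma rev_coeffs_eq_0: "n \<le> l \<Longrightarrow> rev_coeffs n f l = 0"
  unfolding rev_coeffs_def by simp

lemma transpose_comp_mat_eq_plant_A:
  assumes "i < n" "l < n"
  shows "comp_mat n c $$ (l,i) = plant_A n a $$ (i,l) + (if l = n-1 then rev_coeffs n (\<lambda>k. a k - c k) i else 0)"
  using assms by (auto simp: plant_A_entry comp_mat_entry comp_poly_coeff_def rev_coeffs_def)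

lemma sum_mult_last:
  fixes f :: "nat \<Rightarrow> real"
  assumes "n \<ge> 1"
  shows "(\<Sum>j<n. f j * (if j = n-1 then y else 0)) = f (n-1) * y"
  using assms by (simp add: if_distrib[of "(*) _"] sum.delta' cong: if_cong)

lemma sum_mult_intertwine:
  fixes K A :: "nat \<Rightarrow> nat \<Rightarrow> real" and f :: "nat \<Rightarrow> real"
  assumes KA: "\<And>i l. i < n \<Longrightarrow> l < n \<Longrightarrow> (\<Sum>j<n. K i j * A j l) = (\<Sum>m<n. A m i * K m l)"
    and i: "i < n"
  shows "(\<Sum>j<n. K i j * (\<Sum>l<n. A j l * f l)) = (\<Sum>l<n. A l i * (\<Sum>j<n. K l j * f j))"
proof -
  have "(\<Sum>j<n. K i j * (\<Sum>l<n. A j l * f l)) = (\<Sum>j<n. \<Sum>l<n. K i j * A j l * f l)"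
    by (simp add: sum_distrib_left mult.assoc)
  also have "\<dots> = (\<Sum>l<n. (\<Sum>j<n. K i j * A j l) * f l)"
    by (subst sum.swap) (simp add: sum_distrib_right)
  also have "\<dots> = (\<Sum>l<n. (\<Sum>m<n. A m i * K m l) * f l)" using KA i by simp
  also have "\<dots> = (\<Sum>m<n. \<Sum>l<n. A m i * K m l * f l)"
    by (subst sum.swap) (simp add: sum_distrib_right)
  also have "\<dots> = (\<Sum>l<n. A l i * (\<Sum>j<n. K l j * f j))" by (simp add: sum_distrib_left mult.assoc)
  finally show ?thesis .
qed

text \<open>The change of coordinates \<open>w = x + K \<mu> + J \<zeta>\<close>, with Bezoutians \<open>K\<close> of \<open>(c, a - c)\<close> and \<open>J\<close>
  of \<open>(c, - b)\<close>, removes the input: \<open>A\<^sub>r\<^sup>T w\<close> equals the sum of the right-hand sides of the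
  plant and of the filters \<open>K \<mu>\<close>, \<open>J \<zeta>\<close>.\<close>

lemma unforced_integrand_eq:
  fixes a b c X Mu Z :: "nat \<Rightarrow> real" and v :: real
  assumes n1: "n \<ge> 1" and i: "i < n"
  defines "K \<equiv> bezout_entry n c (rev_coeffs n (\<lambda>k. a k - c k))"
    and "J \<equiv> bezout_entry n c (rev_coeffs n (\<lambda>k. - b k))"
  shows "(\<Sum>l<n. comp_mat n c $$ (l,i) * (X l + (\<Sum>j<n. K l j * Mu j) + (\<Sum>j<n. J l j * Z j)))
    = ((\<Sum>l<n. plant_A n a $$ (i,l) * X l) + v * b (n-i))
      + (\<Sum>j<n. K i j * ((\<Sum>l<n. comp_mat n c $$ (j,l) * Mu l) + (if j = n-1 then X (n-1) else 0)))
      + (\<Sum>j<n. J i j * ((\<Sum>l<n. comp_mat n c $$ (j,l) * Z l) + (if j = n-1 then v else 0)))"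
proof -
  note last_col = bezout_entry_last_col[where v = "rev_coeffs n _", OF rev_coeffs_eq_0 i]
  have KJ_last: "K i (n-1) = rev_coeffs n (\<lambda>k. a k - c k) i" "J i (n-1) = - b (n-i)"
    unfolding K_def J_def using last_col i by (simp_all add: rev_coeffs_def)
  have X: "(\<Sum>l<n. plant_A n a $$ (i,l) * X l) + K i (n-1) * X (n-1) = (\<Sum>l<n. comp_mat n c $$ (l,i) * X l)"
  proof -
    have "comp_mat n c $$ (l,i) * X l = plant_A n a $$ (i,l) * X l + (if l = n-1 then K i (n-1) * X (n-1) else 0)"
      if "l < n" for l
      using transpose_comp_mat_eq_plant_A[OF i that, of c a] KJ_last(1)
      by (auto simp: algebra_simps)
    then have "(\<Sum>l<n. comp_mat n c $$ (l,i) * X l)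
        = (\<Sum>l<n. plant_A n a $$ (i,l) * X l + (if l = n-1 then K i (n-1) * X (n-1) else 0))"
      by (intro sum.cong) auto
    then show ?thesis using n1 by (simp add: sum.distrib)
  qed
  have Mu: "(\<Sum>j<n. K i j * (\<Sum>l<n. comp_mat n c $$ (j,l) * Mu l)) = (\<Sum>l<n. comp_mat n c $$ (l,i) * (\<Sum>j<n. K l j * Mu j))"
    by (rule sum_mult_intertwine[OF _ i]) (simp add: K_def bezout_entry_comp_mat_commute[where v = "rev_coeffs n _", OF rev_coeffs_eq_0])
  have Z: "(\<Sum>j<n. J i j * (\<Sum>l<n. comp_mat n c $$ (j,l) * Z l)) = (\<Sum>l<n. comp_mat n c $$ (l,i) * (\<Sum>j<n. J l j * Z j))"
    by (rule sum_mult_intertwine[OF _ i]) (simp add: J_def bezout_entry_comp_mat_commute[where v = "rev_coeffs n _", OF rev_coeffs_eq_0])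
  have "(\<Sum>j<n. K i j * ((\<Sum>l<n. comp_mat n c $$ (j,l) * Mu l) + (if j = n-1 then X (n-1) else 0)))
      = (\<Sum>j<n. K i j * (\<Sum>l<n. comp_mat n c $$ (j,l) * Mu l)) + K i (n-1) * X (n-1)"
    unfolding distrib_left sum.distrib sum_mult_last[OF n1] ..
  moreover have "(\<Sum>j<n. J i j * ((\<Sum>l<n. comp_mat n c $$ (j,l) * Z l) + (if j = n-1 then v else 0)))
      = (\<Sum>j<n. J i j * (\<Sum>l<n. comp_mat n c $$ (j,l) * Z l)) + J i (n-1) * v"
    unfolding distrib_left sum.distrib sum_mult_last[OF n1] ..
  moreover have "(\<Sum>l<n. comp_mat n c $$ (l,i) * (X l + (\<Sum>j<n. K l j * Mu j) + (\<Sum>j<n. J l j * Z j)))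
      = (\<Sum>l<n. comp_mat n c $$ (l,i) * X l) + (\<Sum>l<n. comp_mat n c $$ (l,i) * (\<Sum>j<n. K l j * Mu j))
        + (\<Sum>l<n. comp_mat n c $$ (l,i) * (\<Sum>j<n. J l j * Z j))"
    unfolding distrib_left sum.distrib ..
  ultimately show ?thesis using X Mu Z KJ_last(2) by simp
qed

lemma sum_lessThan_add:
  fixes f :: "nat \<Rightarrow> real"
  shows "(\<Sum>l<n+m. f l) = (\<Sum>l<n. f l) + (\<Sum>l<m. f (n+l))"
  by (induct m) (auto simp: sum.lessThan_Suc)

lemma AB_f_carrier: "AB_f n a b c \<in> carrier_mat (2*n) (2*n+1)"
  unfolding AB_f_def by simp

lemma AB_f_mult_vec_entry:
  assumes v: "v \<in> carrier_vec (2*n)" and r: "r < 2*n"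
  shows "(AB_f n a b c *\<^sub>v (v @\<^sub>v Matrix.vec 1 (\<lambda>_. w))) $ r =
    (if r < n then (\<Sum>l<n. comp_mat n c $$ (r,l) * v $ l) + (if r = n-1 then w else 0)
     else (\<Sum>l<n. L_b n b $$ (r-n,l) * v $ l) + (\<Sum>l<n. comp_mat n a $$ (r-n,l) * v $ (n+l)))"
proof -
  define \<psi> where "\<psi> = v @\<^sub>v Matrix.vec 1 (\<lambda>_. w)"
  have \<psi>: "\<psi> \<in> carrier_vec (2*n+1)"
    unfolding \<psi>_def by (rule append_carrier_vec[OF v]) simp
  have "(AB_f n a b c *\<^sub>v \<psi>) $ r = (\<Sum>l<2*n+1. AB_f n a b c $$ (r,l) * \<psi> $ l)"
    by (rule mult_mat_vec_entry[OF AB_f_carrier \<psi> r])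
  also have "\<dots> = (\<Sum>l<2*n. A_f n a b c $$ (r,l) * v $ l) + B_f n $ r * w"
  proof -
    have "(\<Sum>l<2*n. AB_f n a b c $$ (r,l) * \<psi> $ l) = (\<Sum>l<2*n. A_f n a b c $$ (r,l) * v $ l)"
      using v r by (intro sum.cong refl) (simp add: AB_f_def \<psi>_def)
    moreover have "AB_f n a b c $$ (r,2*n) * \<psi> $ (2*n) = B_f n $ r * w"
      using v r by (simp add: AB_f_def \<psi>_def)
    ultimately show ?thesis by simp
  qed
  also have "(\<Sum>l<2*n. A_f n a b c $$ (r,l) * v $ l)
      = (\<Sum>l<n. A_f n a b c $$ (r,l) * v $ l) + (\<Sum>l<n. A_f n a b c $$ (r,n+l) * v $ (n+l))"
    unfolding mult_2 by (rule sum_lessThan_add)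
  finally show ?thesis
    unfolding \<psi>_def using r by (auto simp: A_f_def B_f_def L_b_def comp_mat_def intro!: sum.cong)
qed

lemma eps_carrier: "eps n c \<beta> x0 t \<in> carrier_vec (2*n)"
  unfolding eps_def Gamma_star_def G_f_def carrier_vec_def by simp

lemma eps_entry_eq_0:
  assumes n1: "n \<ge> 1" and x0: "x0 \<in> carrier_vec n" and A2: "\<not> eigenvalue (comp_mat n c) (- \<beta>)"
    and r: "r < 2*n" "r \<noteq> 2*n-1"
  shows "eps n c \<beta> x0 t $ r = 0"
proof -
  obtain Ni where Ni: "mat_inverse (transpose_mat (comp_mat n c) + \<beta> \<cdot>\<^sub>m 1\<^sub>m n) = Some Ni"
    using transpose_shift_invertible[OF comp_mat_carrier A2] by blast
  have "Ni \<in> carrier_mat n n" using mat_inverse(2)[OF _ Ni] comp_mat_carrier[of n c] by auto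
  moreover have "mat_exp (transpose_mat (comp_mat n c)) t *\<^sub>v x0 \<in> carrier_vec n"
    using comp_mat_carrier[of n c] by (intro mult_mat_vec_carrier[OF mat_exp_carrier x0]) simp
  ultimately show ?thesis
    using eps_eq_resolvent[OF x0 Ni] G_f_mult_vec_entry[OF n1 _ r(1)] r(2) x0 by simp
qed

lemma has_integral_if_zero:
  "(f has_integral y) S \<Longrightarrow> ((\<lambda>s. if P then f s else 0) has_integral (if P then y else (0::real))) S"
  by (cases P) auto

lemma sum_mult_affine:
  fixes A p z :: "nat \<Rightarrow> real"
  shows "(\<Sum>l<n. A l * (k * p l + z l)) = k * (\<Sum>l<n. A l * p l) + (\<Sum>l<n. A l * z l)"
  by (simp add: sum_distrib_left sum.distrib algebra_simps)

lemma filter_bottom_regroup: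
  fixes Mu Z :: "nat \<Rightarrow> real"
  assumes n1: "n \<ge> 1" and r: "r < n"
  shows "(\<Sum>l<n. comp_mat n c $$ (r,l) * Mu l) + (if r = n-1 then y else 0)
    = (\<Sum>l<n. L_b n b $$ (r,l) * Z l) + (\<Sum>l<n. comp_mat n a $$ (r,l) * Mu l)
      + (if r = n-1 then y + (\<Sum>l<n. (a (n-l) - c (n-l)) * Mu l) - (\<Sum>l<n. b (n-l) * Z l) else 0)"
proof (cases "r = n-1")
  case True
  have "(\<Sum>l<n. comp_mat n c $$ (r,l) * Mu l) = (\<Sum>l<n. - c (n-l) * Mu l)"
    "(\<Sum>l<n. comp_mat n a $$ (r,l) * Mu l) = (\<Sum>l<n. - a (n-l) * Mu l)"
    "(\<Sum>l<n. L_b n b $$ (r,l) * Z l) = (\<Sum>l<n. b (n-l) * Z l)"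
    using True n1 by (auto simp: comp_mat_def L_b_def intro!: sum.cong)
  then show ?thesis using True by (simp add: left_diff_distrib sum_subtractf sum_negf)
next
  case False
  have "(\<Sum>l<n. comp_mat n c $$ (r,l) * Mu l) = (\<Sum>l<n. comp_mat n a $$ (r,l) * Mu l)"
    "(\<Sum>l<n. L_b n b $$ (r,l) * Z l) = 0"
    using False r by (auto simp: comp_mat_def L_b_def intro!: sum.cong sum.neutral)
  then show ?thesis using False by simp
qed

locale filter_experiment =
  fixes n :: nat and a b c :: "nat \<Rightarrow> real" and \<beta> :: real and x0 :: "real Matrix.vec"
    and u :: "real \<Rightarrow> real" and T :: real and x \<zeta> \<mu> \<phi> :: "real \<Rightarrow> real Matrix.vec" and \<upsilon> :: "real \<Rightarrow> real"
  assumes n_pos: "n \<ge> 1" and x0_dim: "x0 \<in> carrier_vec n"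
    and plant: "solves_ode T (plant_A n a) (\<lambda>s. u s \<cdot>\<^sub>v plant_B n b) x0 x"
    and zeta: "solves_ode T (comp_mat n c) (\<lambda>s. u s \<cdot>\<^sub>v B_r n) (0\<^sub>v n) \<zeta>"
    and mu: "solves_ode T (comp_mat n c) (\<lambda>s. ((plant_C n *\<^sub>v x s) $ 0) \<cdot>\<^sub>v B_r n) (0\<^sub>v n) \<mu>"
    and phi: "solves_ode T ((- \<beta>) \<cdot>\<^sub>m 1\<^sub>m (2 * n)) (\<lambda>s. \<zeta> s @\<^sub>v \<mu> s) (0\<^sub>v (2 * n)) \<phi>"
    and ups: "\<forall>t\<in>{0..T}. ((\<lambda>s. - \<beta> * \<upsilon> s + u s) has_integral \<upsilon> t) {0..t}"
    and shift_not_eigenvalue: "\<not> eigenvalue (comp_mat n c) (- \<beta>)"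
begin

lemma plant_components:
  shows x_carrier: "\<And>s. s \<in> {0..T} \<Longrightarrow> x s \<in> carrier_vec n"
    and plant_integral: "\<And>t i. t \<in> {0..T} \<Longrightarrow> i < n \<Longrightarrow>
      ((\<lambda>s. (\<Sum>l<n. plant_A n a $$ (i,l) * x s $ l) + u s * b (n-i)) has_integral x t $ i - x0 $ i) {0..t}"
proof -
  have "\<forall>s\<in>{0..T}. u s \<cdot>\<^sub>v plant_B n b \<in> carrier_vec n" by (simp add: plant_B_def)
  note comps = solves_ode_iff_components[OF plant_A_carrier this, THEN iffD1, OF plant]
  show "\<And>s. s \<in> {0..T} \<Longrightarrow> x s \<in> carrier_vec n" using comps by blast
  show "\<And>t i. t \<in> {0..T} \<Longrightarrow> i < n \<Longrightarrow>
      ((\<lambda>s. (\<Sum>l<n. plant_A n a $$ (i,l) * x s $ l) + u s * b (n-i)) has_integral x t $ i - x0 $ i) {0..t}"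
    using comps by (simp add: plant_B_def)
qed

lemma zeta_components:
  shows zeta_carrier: "\<And>s. s \<in> {0..T} \<Longrightarrow> \<zeta> s \<in> carrier_vec n"
    and zeta_integral: "\<And>t i. t \<in> {0..T} \<Longrightarrow> i < n \<Longrightarrow>
      ((\<lambda>s. (\<Sum>l<n. comp_mat n c $$ (i,l) * \<zeta> s $ l) + (if i = n-1 then u s else 0)) has_integral \<zeta> t $ i) {0..t}"
proof -
  have "\<forall>s\<in>{0..T}. u s \<cdot>\<^sub>v B_r n \<in> carrier_vec n" by (simp add: B_r_def)
  note comps = solves_ode_iff_components[OF comp_mat_carrier this, THEN iffD1, OF zeta]
  show "\<And>s. s \<in> {0..T} \<Longrightarrow> \<zeta> s \<in> carrier_vec n" using comps by blast
  show "\<And>t i. t \<in> {0..T} \<Longrightarrow> i < n \<Longrightarrow>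
      ((\<lambda>s. (\<Sum>l<n. comp_mat n c $$ (i,l) * \<zeta> s $ l) + (if i = n-1 then u s else 0)) has_integral \<zeta> t $ i) {0..t}"
    using comps by (simp add: B_r_def if_distrib[of "(*) _"] cong: if_cong)
qed

lemma output_eq: "s \<in> {0..T} \<Longrightarrow> (plant_C n *\<^sub>v x s) $ 0 = x s $ (n-1)"
  using x_carrier[of s] mult_mat_vec_entry[of "plant_C n" 1 n "x s" 0] n_pos
  by (simp add: plant_C_def if_distrib[of "\<lambda>z. z * _"] sum.delta cong: if_cong)

lemma mu_components:
  shows mu_carrier: "\<And>s. s \<in> {0..T} \<Longrightarrow> \<mu> s \<in> carrier_vec n"
    and mu_integral: "\<And>t i. t \<in> {0..T} \<Longrightarrow> i < n \<Longrightarrow>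
      ((\<lambda>s. (\<Sum>l<n. comp_mat n c $$ (i,l) * \<mu> s $ l) + (if i = n-1 then x s $ (n-1) else 0)) has_integral \<mu> t $ i) {0..t}"
proof -
  have "\<forall>s\<in>{0..T}. ((plant_C n *\<^sub>v x s) $ 0) \<cdot>\<^sub>v B_r n \<in> carrier_vec n" by (simp add: B_r_def)
  note comps = solves_ode_iff_components[OF comp_mat_carrier this, THEN iffD1, OF mu]
  show "\<And>s. s \<in> {0..T} \<Longrightarrow> \<mu> s \<in> carrier_vec n" using comps by blast
  fix t i assume t: "t \<in> {0..T}" and i: "i < n"
  have int: "((\<lambda>s. (\<Sum>l<n. comp_mat n c $$ (i,l) * \<mu> s $ l) + (((plant_C n *\<^sub>v x s) $ 0) \<cdot>\<^sub>v B_r n) $ i)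
      has_integral \<mu> t $ i) {0..t}"
    using comps[THEN conjunct2, rule_format, OF t i] i by simp
  have eq: "(\<Sum>l<n. comp_mat n c $$ (i,l) * \<mu> s $ l) + (((plant_C n *\<^sub>v x s) $ 0) \<cdot>\<^sub>v B_r n) $ i
      = (\<Sum>l<n. comp_mat n c $$ (i,l) * \<mu> s $ l) + (if i = n-1 then x s $ (n-1) else 0)"
    if "s \<in> {0..t}" for s
    using output_eq[of s] that t i by (simp add: B_r_def)
  show "((\<lambda>s. (\<Sum>l<n. comp_mat n c $$ (i,l) * \<mu> s $ l) + (if i = n-1 then x s $ (n-1) else 0))
      has_integral \<mu> t $ i) {0..t}"
    by (rule has_integral_eq[OF eq int])
qed

lemma phi_components:
  shows phi_carrier: "\<And>s. s \<in> {0..T} \<Longrightarrow> \<phi> s \<in> carrier_vec (2*n)"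
    and phi_integral: "\<And>t k. t \<in> {0..T} \<Longrightarrow> k < 2*n \<Longrightarrow>
      ((\<lambda>s. - \<beta> * \<phi> s $ k + (if k < n then \<zeta> s $ k else \<mu> s $ (k-n))) has_integral \<phi> t $ k) {0..t}"
proof -
  have forcing: "\<forall>s\<in>{0..T}. \<zeta> s @\<^sub>v \<mu> s \<in> carrier_vec (2*n)"
    using zeta_carrier mu_carrier by (auto simp: mult_2)
  have M: "(- \<beta>) \<cdot>\<^sub>m 1\<^sub>m (2*n) \<in> carrier_mat (2*n) (2*n)" by simp
  note comps = solves_ode_iff_components[OF M forcing, THEN iffD1, OF phi]
  show "\<And>s. s \<in> {0..T} \<Longrightarrow> \<phi> s \<in> carrier_vec (2*n)" using comps by auto
  fix t k assume t: "t \<in> {0..T}" and k: "k < 2*n"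
  have int: "((\<lambda>s. (\<Sum>l<2*n. ((- \<beta>) \<cdot>\<^sub>m 1\<^sub>m (2*n)) $$ (k,l) * \<phi> s $ l) + (\<zeta> s @\<^sub>v \<mu> s) $ k)
      has_integral \<phi> t $ k) {0..t}"
    using comps[THEN conjunct2, rule_format, OF t k] k by simp
  have eq: "(\<Sum>l<2*n. ((- \<beta>) \<cdot>\<^sub>m 1\<^sub>m (2*n)) $$ (k,l) * \<phi> s $ l) + (\<zeta> s @\<^sub>v \<mu> s) $ k
      = - \<beta> * \<phi> s $ k + (if k < n then \<zeta> s $ k else \<mu> s $ (k-n))" if "s \<in> {0..t}" for s
    using sum_smult_one_mat[OF k, of "- \<beta>" "\<lambda>l. \<phi> s $ l"] zeta_carrier[of s] mu_carrier[of s] that t k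
    by auto
  show "((\<lambda>s. - \<beta> * \<phi> s $ k + (if k < n then \<zeta> s $ k else \<mu> s $ (k-n))) has_integral \<phi> t $ k) {0..t}"
    by (rule has_integral_eq[OF eq int])
qed

lemma phi_top_integral:
  "t \<in> {0..T} \<Longrightarrow> k < n \<Longrightarrow> ((\<lambda>s. - \<beta> * \<phi> s $ k + \<zeta> s $ k) has_integral \<phi> t $ k) {0..t}"
  using phi_integral[of t k] by simp

lemma phi_bottom_integral:
  "t \<in> {0..T} \<Longrightarrow> k < n \<Longrightarrow> ((\<lambda>s. - \<beta> * \<phi> s $ (n+k) + \<mu> s $ k) has_integral \<phi> t $ (n+k)) {0..t}"
  using phi_integral[of t "n+k"] by simp

definition unforced_state :: "real \<Rightarrow> real Matrix.vec" where
  "unforced_state s = Matrix.vec n (\<lambda>i. x s $ i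
     + (\<Sum>j<n. bezout_entry n c (rev_coeffs n (\<lambda>k. a k - c k)) i j * \<mu> s $ j)
     + (\<Sum>j<n. bezout_entry n c (rev_coeffs n (\<lambda>k. - b k)) i j * \<zeta> s $ j))"

lemma unforced_state_solves_ode:
  "solves_ode T (transpose_mat (comp_mat n c)) (\<lambda>_. 0\<^sub>v n) x0 unforced_state"
proof -
  define K where "K = bezout_entry n c (rev_coeffs n (\<lambda>k. a k - c k))"
  define J where "J = bezout_entry n c (rev_coeffs n (\<lambda>k. - b k))"
  have AT: "transpose_mat (comp_mat n c) \<in> carrier_mat n n" using comp_mat_carrier by simp
  have W: "unforced_state s $ l = x s $ l + (\<Sum>j<n. K l j * \<mu> s $ j) + (\<Sum>j<n. J l j * \<zeta> s $ j)"
    if "l < n" for s l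
    using that by (simp add: unforced_state_def K_def J_def)
  show ?thesis
    unfolding solves_ode_iff_components[OF AT, of T "\<lambda>_. 0\<^sub>v n", simplified]
  proof (intro conjI ballI allI impI)
    show "unforced_state t \<in> carrier_vec n" for t by (simp add: unforced_state_def)
  next
    fix t i assume t: "t \<in> {0..T}" and i: "i < n"
    have int: "((\<lambda>s. ((\<Sum>l<n. plant_A n a $$ (i,l) * x s $ l) + u s * b (n-i))
        + (\<Sum>j<n. K i j * ((\<Sum>l<n. comp_mat n c $$ (j,l) * \<mu> s $ l) + (if j = n-1 then x s $ (n-1) else 0)))
        + (\<Sum>j<n. J i j * ((\<Sum>l<n. comp_mat n c $$ (j,l) * \<zeta> s $ l) + (if j = n-1 then u s else 0))))
        has_integral (x t $ i - x0 $ i) + (\<Sum>j<n. K i j * \<mu> t $ j) + (\<Sum>j<n. J i j * \<zeta> t $ j)) {0..t}"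
      by (intro has_integral_add has_integral_sum has_integral_mult_right
          plant_integral mu_integral zeta_integral t i) auto
    have eq: "(\<Sum>l<n. comp_mat n c $$ (l,i) * (x s $ l + (\<Sum>j<n. K l j * \<mu> s $ j) + (\<Sum>j<n. J l j * \<zeta> s $ j)))
      = ((\<Sum>l<n. plant_A n a $$ (i,l) * x s $ l) + u s * b (n-i))
        + (\<Sum>j<n. K i j * ((\<Sum>l<n. comp_mat n c $$ (j,l) * \<mu> s $ l) + (if j = n-1 then x s $ (n-1) else 0)))
        + (\<Sum>j<n. J i j * ((\<Sum>l<n. comp_mat n c $$ (j,l) * \<zeta> s $ l) + (if j = n-1 then u s else 0)))" for s
      unfolding K_def J_def by (rule unforced_integrand_eq[OF n_pos i])
    have "(\<Sum>l<n. transpose_mat (comp_mat n c) $$ (i,l) * unforced_state s $ l)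
      = (\<Sum>l<n. comp_mat n c $$ (l,i) * (x s $ l + (\<Sum>j<n. K l j * \<mu> s $ j) + (\<Sum>j<n. J l j * \<zeta> s $ j)))" for s
      using i comp_mat_carrier[of n c] by (intro sum.cong refl) (simp add: W)
    then have "((\<lambda>s. \<Sum>l<n. transpose_mat (comp_mat n c) $$ (i,l) * unforced_state s $ l)
        has_integral (x t $ i - x0 $ i) + (\<Sum>j<n. K i j * \<mu> t $ j) + (\<Sum>j<n. J i j * \<zeta> t $ j)) {0..t}"
      using int unfolding eq by simp
    then show "((\<lambda>s. \<Sum>l<n. transpose_mat (comp_mat n c) $$ (i,l) * unforced_state s $ l)
        has_integral unforced_state t $ i - x0 $ i) {0..t}"
      using W[OF i, of t] by (simp add: algebra_simps)
  qed
qed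

lemma unforced_output:
  assumes t: "t \<in> {0..T}"
  shows "x t $ (n-1) + (\<Sum>l<n. (a (n-l) - c (n-l)) * \<mu> t $ l) - (\<Sum>l<n. b (n-l) * \<zeta> t $ l)
    = (mat_exp (transpose_mat (comp_mat n c)) t *\<^sub>v x0) $ (n-1)"
proof -
  have AT: "transpose_mat (comp_mat n c) \<in> carrier_mat n n" using comp_mat_carrier by simp
  have "unforced_state t = mat_exp (transpose_mat (comp_mat n c)) t *\<^sub>v x0"
    by (rule solves_ode_unique[OF AT _ unforced_state_solves_ode mat_exp_solves_ode[OF AT x0_dim] t]) simp
  moreover have "unforced_state t $ (n-1)
      = x t $ (n-1) + (\<Sum>l<n. (a (n-l) - c (n-l)) * \<mu> t $ l) - (\<Sum>l<n. b (n-l) * \<zeta> t $ l)"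
  proof -
    have last_row: "bezout_entry n c (rev_coeffs n f) (n-1) l = f (n-l)" if "l < n" for f l
      by (subst bezout_entry_last_row[where v = "rev_coeffs n f", OF rev_coeffs_eq_0 that])
        (use that in \<open>simp_all add: rev_coeffs_def\<close>)
    have "(\<Sum>j<n. bezout_entry n c (rev_coeffs n (\<lambda>k. a k - c k)) (n-1) j * \<mu> t $ j)
        = (\<Sum>l<n. (a (n-l) - c (n-l)) * \<mu> t $ l)"
      by (intro sum.cong refl) (use last_row in simp)
    moreover have "(\<Sum>j<n. bezout_entry n c (rev_coeffs n (\<lambda>k. - b k)) (n-1) j * \<zeta> t $ j)
        = - (\<Sum>l<n. b (n-l) * \<zeta> t $ l)"
      unfolding sum_negf[symmetric] by (intro sum.cong refl) (use last_row in simp)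
    ultimately show ?thesis using n_pos by (simp add: unforced_state_def)
  qed
  ultimately show ?thesis by simp
qed

lemma eps_integral:
  assumes t: "t \<in> {0..T}"
  shows "((\<lambda>s. (x s $ (n-1) + (\<Sum>l<n. (a (n-l) - c (n-l)) * \<mu> s $ l) - (\<Sum>l<n. b (n-l) * \<zeta> s $ l))
      - \<beta> * eps n c \<beta> x0 s $ (2*n-1)) has_integral eps n c \<beta> x0 t $ (2*n-1)) {0..t}"
proof (rule has_integral_eq[OF _ eps_last_integral[OF n_pos x0_dim shift_not_eigenvalue]])
  show "0 \<le> t" using t by simp
  fix s assume "s \<in> {0..t}"
  then show "(mat_exp (transpose_mat (comp_mat n c)) s *\<^sub>v x0) $ (n-1) - \<beta> * eps n c \<beta> x0 s $ (2*n-1)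
    = (x s $ (n-1) + (\<Sum>l<n. (a (n-l) - c (n-l)) * \<mu> s $ l) - (\<Sum>l<n. b (n-l) * \<zeta> s $ l))
      - \<beta> * eps n c \<beta> x0 s $ (2*n-1)"
    using unforced_output[of s] t by simp
qed

text \<open>In both blocks the difference of the two sides solves \<open>R' = - \<beta> R\<close>, \<open>R 0 = 0\<close>.\<close>

lemma top_identity:
  assumes r: "r < n" and t: "t \<in> {0..T}"
  shows "\<zeta> t $ r - \<beta> * \<phi> t $ r = (\<Sum>l<n. comp_mat n c $$ (r,l) * \<phi> t $ l) + (if r = n-1 then \<upsilon> t else 0)"
proof -
  define R where "R s = \<zeta> s $ r - \<beta> * \<phi> s $ r - (\<Sum>l<n. comp_mat n c $$ (r,l) * \<phi> s $ l)
    - (if r = n-1 then \<upsilon> s else 0)" for s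
  have "((\<lambda>s. - \<beta> * R s) has_integral R t) {0..t}" if t: "t \<in> {0..T}" for t
  proof -
    have "((\<lambda>s. ((\<Sum>l<n. comp_mat n c $$ (r,l) * \<zeta> s $ l) + (if r = n-1 then u s else 0))
        - \<beta> * (- \<beta> * \<phi> s $ r + \<zeta> s $ r) - (\<Sum>l<n. comp_mat n c $$ (r,l) * (- \<beta> * \<phi> s $ l + \<zeta> s $ l))
        - (if r = n-1 then - \<beta> * \<upsilon> s + u s else 0)) has_integral R t) {0..t}"
      unfolding R_def
      by (intro has_integral_diff has_integral_mult_right has_integral_sum has_integral_if_zero
          zeta_integral phi_top_integral ups[rule_format] t r) auto
    moreover have "((\<Sum>l<n. comp_mat n c $$ (r,l) * \<zeta> s $ l) + (if r = n-1 then u s else 0))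
        - \<beta> * (- \<beta> * \<phi> s $ r + \<zeta> s $ r) - (\<Sum>l<n. comp_mat n c $$ (r,l) * (- \<beta> * \<phi> s $ l + \<zeta> s $ l))
        - (if r = n-1 then - \<beta> * \<upsilon> s + u s else 0) = - \<beta> * R s" for s
      unfolding R_def sum_mult_affine by (simp add: algebra_simps)
    ultimately show ?thesis by simp
  qed
  then have "R t = 0" by (rule scalar_integral_equation_zero_solution[OF _ t])
  then show ?thesis unfolding R_def by simp
qed

lemma bottom_identity:
  assumes r: "r < n" and t: "t \<in> {0..T}"
  shows "\<mu> t $ r - \<beta> * \<phi> t $ (n+r) = (\<Sum>l<n. L_b n b $$ (r,l) * \<phi> t $ l)
    + (\<Sum>l<n. comp_mat n a $$ (r,l) * \<phi> t $ (n+l)) + (if r = n-1 then eps n c \<beta> x0 t $ (2*n-1) else 0)"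
proof -
  define E where "E s = eps n c \<beta> x0 s $ (2*n-1)" for s
  define R where "R s = \<mu> s $ r - \<beta> * \<phi> s $ (n+r) - (\<Sum>l<n. L_b n b $$ (r,l) * \<phi> s $ l)
    - (\<Sum>l<n. comp_mat n a $$ (r,l) * \<phi> s $ (n+l)) - (if r = n-1 then E s else 0)" for s
  have "((\<lambda>s. - \<beta> * R s) has_integral R t) {0..t}" if t: "t \<in> {0..T}" for t
  proof -
    have "((\<lambda>s. ((\<Sum>l<n. comp_mat n c $$ (r,l) * \<mu> s $ l) + (if r = n-1 then x s $ (n-1) else 0))
        - \<beta> * (- \<beta> * \<phi> s $ (n+r) + \<mu> s $ r)
        - (\<Sum>l<n. L_b n b $$ (r,l) * (- \<beta> * \<phi> s $ l + \<zeta> s $ l))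
        - (\<Sum>l<n. comp_mat n a $$ (r,l) * (- \<beta> * \<phi> s $ (n+l) + \<mu> s $ l))
        - (if r = n-1 then (x s $ (n-1) + (\<Sum>l<n. (a (n-l) - c (n-l)) * \<mu> s $ l) - (\<Sum>l<n. b (n-l) * \<zeta> s $ l))
            - \<beta> * E s else 0)) has_integral R t) {0..t}"
      unfolding R_def E_def
      by (intro has_integral_diff has_integral_mult_right has_integral_sum has_integral_if_zero
          mu_integral phi_top_integral phi_bottom_integral eps_integral t r) auto
    moreover have "((\<Sum>l<n. comp_mat n c $$ (r,l) * \<mu> s $ l) + (if r = n-1 then x s $ (n-1) else 0))
        - \<beta> * (- \<beta> * \<phi> s $ (n+r) + \<mu> s $ r)
        - (\<Sum>l<n. L_b n b $$ (r,l) * (- \<beta> * \<phi> s $ l + \<zeta> s $ l))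
        - (\<Sum>l<n. comp_mat n a $$ (r,l) * (- \<beta> * \<phi> s $ (n+l) + \<mu> s $ l))
        - (if r = n-1 then (x s $ (n-1) + (\<Sum>l<n. (a (n-l) - c (n-l)) * \<mu> s $ l) - (\<Sum>l<n. b (n-l) * \<zeta> s $ l))
            - \<beta> * E s else 0) = - \<beta> * R s" for s
    proof -
      have "(if r = n-1 then (x s $ (n-1) + (\<Sum>l<n. (a (n-l) - c (n-l)) * \<mu> s $ l) - (\<Sum>l<n. b (n-l) * \<zeta> s $ l))
            - \<beta> * E s else 0)
        = (if r = n-1 then x s $ (n-1) + (\<Sum>l<n. (a (n-l) - c (n-l)) * \<mu> s $ l) - (\<Sum>l<n. b (n-l) * \<zeta> s $ l) else 0)
          - \<beta> * (if r = n-1 then E s else 0)"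
        by simp
      then show ?thesis
        using filter_bottom_regroup[OF n_pos r, of c "\<lambda>l. \<mu> s $ l" "x s $ (n-1)" b "\<lambda>l. \<zeta> s $ l" a]
        unfolding R_def sum_mult_affine by (simp add: algebra_simps)
    qed
    ultimately show ?thesis by simp
  qed
  then have "R t = 0" by (rule scalar_integral_equation_zero_solution[OF _ t])
  then show ?thesis unfolding R_def E_def by simp
qed

lemma regressor_identity:
  assumes t: "t \<in> {0..T}"
  shows "(\<zeta> t @\<^sub>v \<mu> t) - \<beta> \<cdot>\<^sub>v \<phi> t
    = AB_f n a b c *\<^sub>v (\<phi> t @\<^sub>v Matrix.vec 1 (\<lambda>_. \<upsilon> t)) + eps n c \<beta> x0 t"
proof -
  have \<zeta>: "\<zeta> t \<in> carrier_vec n" and \<mu>: "\<mu> t \<in> carrier_vec n" and \<phi>: "\<phi> t \<in> carrier_vec (2*n)"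
    using t zeta_carrier mu_carrier phi_carrier by auto
  have \<epsilon>: "eps n c \<beta> x0 t \<in> carrier_vec (2*n)" by (rule eps_carrier)
  show ?thesis
  proof (rule eq_vecI)
    fix r assume "r < dim_vec (AB_f n a b c *\<^sub>v (\<phi> t @\<^sub>v Matrix.vec 1 (\<lambda>_. \<upsilon> t)) + eps n c \<beta> x0 t)"
    then have r: "r < 2*n" using \<epsilon> by simp
    have lhs: "((\<zeta> t @\<^sub>v \<mu> t) - \<beta> \<cdot>\<^sub>v \<phi> t) $ r = (if r < n then \<zeta> t $ r else \<mu> t $ (r-n)) - \<beta> * \<phi> t $ r"
      using \<zeta> \<mu> \<phi> r by auto
    show "((\<zeta> t @\<^sub>v \<mu> t) - \<beta> \<cdot>\<^sub>v \<phi> t) $ r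
      = (AB_f n a b c *\<^sub>v (\<phi> t @\<^sub>v Matrix.vec 1 (\<lambda>_. \<upsilon> t)) + eps n c \<beta> x0 t) $ r"
    proof (cases "r < n")
      case True
      then show ?thesis
        using top_identity[OF True t] AB_f_mult_vec_entry[OF \<phi> r] eps_entry_eq_0[OF n_pos x0_dim shift_not_eigenvalue r] \<epsilon> r lhs
        by simp
    next
      case False
      then obtain k where k: "k < n" "r = n + k" using r by (metis add_diff_inverse_nat add_less_cancel_left mult_2)
      then show ?thesis
        using bottom_identity[OF k(1) t] AB_f_mult_vec_entry[OF \<phi> r] eps_entry_eq_0[OF n_pos x0_dim shift_not_eigenvalue r]
          \<epsilon> r lhs by (auto simp: mult_2)
    qed
  qed (use \<zeta> \<mu> \<phi> \<epsilon> in simp)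
qed

lemma data_matrix_identity:
  assumes samples: "\<And>j. j < N \<Longrightarrow> ts (Suc j) \<in> {0..T}"
  shows "sample_mat (2 * n) N ts (\<lambda>t. (\<zeta> t @\<^sub>v \<mu> t) - \<beta> \<cdot>\<^sub>v \<phi> t)
    = AB_f n a b c * (sample_mat (2 * n) N ts \<phi> @\<^sub>r sample_mat 1 N ts (\<lambda>t. Matrix.vec 1 (\<lambda>_. \<upsilon> t)))
      + sample_mat (2 * n) N ts (eps n c \<beta> x0)"
proof -
  have \<psi>: "\<phi> (ts (Suc j)) @\<^sub>v Matrix.vec 1 (\<lambda>_. \<upsilon> (ts (Suc j))) \<in> carrier_vec (2 * n + 1)" if "j < N" for j
    using phi_carrier[OF samples[OF that]] by (intro append_carrier_vec) auto
  have "sample_mat (2 * n) N ts (\<lambda>t. (\<zeta> t @\<^sub>v \<mu> t) - \<beta> \<cdot>\<^sub>v \<phi> t)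
      = sample_mat (2 * n) N ts (\<lambda>t. AB_f n a b c *\<^sub>v (\<phi> t @\<^sub>v Matrix.vec 1 (\<lambda>_. \<upsilon> t)) + eps n c \<beta> x0 t)"
    by (rule sample_mat_cong) (use samples regressor_identity in blast)
  also have "\<dots> = AB_f n a b c * sample_mat (2 * n + 1) N ts (\<lambda>t. \<phi> t @\<^sub>v Matrix.vec 1 (\<lambda>_. \<upsilon> t))
      + sample_mat (2 * n) N ts (eps n c \<beta> x0)"
    using \<psi> by (subst sample_mat_add) (auto simp: eps_carrier sample_mat_mult_mat_vec[OF AB_f_carrier])
  also have "sample_mat (2 * n + 1) N ts (\<lambda>t. \<phi> t @\<^sub>v Matrix.vec 1 (\<lambda>_. \<upsilon> t))
      = sample_mat (2 * n) N ts \<phi> @\<^sub>r sample_mat 1 N ts (\<lambda>t. Matrix.vec 1 (\<lambda>_. \<upsilon> t))"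
    by (rule sample_mat_append_vec) (use phi_carrier samples in auto)
  finally show ?thesis .
qed

end

lemma sample_times_mem:
  fixes ts :: "nat \<Rightarrow> 'a :: {linorder, zero}"
  assumes t_pos: "0 < ts 1" and t_incr: "\<forall>k\<in>{1..<N}. ts k < ts (Suc k)" and j: "j < N"
  shows "ts (Suc j) \<in> {0..ts N}"
proof -
  have mono: "ts k \<le> ts (k + d)" if "1 \<le> k" "k + d \<le> N" for k d
    using that
  proof (induct d)
    case (Suc d)
    then have "ts k \<le> ts (k + d)" and "ts (k + d) < ts (Suc (k + d))" using t_incr by auto
    then have "ts k \<le> ts (Suc (k + d))" by (rule order.trans[OF _ order.strict_implies_order])
    then show ?case by simp
  qed simp
  show ?thesis using mono[of 1 j] mono[of "Suc j" "N - Suc j"] t_pos j by auto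
qed

theorem mainTheorem6:
  fixes n N Nbar :: nat
    and a b c :: "nat \<Rightarrow> real" and \<beta> :: real
    and x0 :: "real Matrix.vec" and u :: "real \<Rightarrow> real" and ts :: "nat \<Rightarrow> real"
    and x \<zeta> \<mu> \<phi> :: "real \<Rightarrow> real Matrix.vec" and \<upsilon> :: "real \<Rightarrow> real"
    and W :: "real mat"
  assumes n_pos: "n \<ge> 1" and N_pos: "N \<ge> 1"
    and x0_dim: "x0 \<in> carrier_vec n"
    and t_pos: "0 < ts 1" and t_incr: "\<forall>k\<in>{1..<N}. ts k < ts (Suc k)"
    and u_int: "u absolutely_integrable_on {0..ts N}"
    and plant: "solves_ode (ts N) (plant_A n a) (\<lambda>s. u s \<cdot>\<^sub>v plant_B n b) x0 x"
    and zeta: "solves_ode (ts N) (comp_mat n c) (\<lambda>s. u s \<cdot>\<^sub>v B_r n) (0\<^sub>v n) \<zeta>"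
    and mu: "solves_ode (ts N) (comp_mat n c) (\<lambda>s. ((plant_C n *\<^sub>v x s) $ 0) \<cdot>\<^sub>v B_r n) (0\<^sub>v n) \<mu>"
    and phi: "solves_ode (ts N) ((- \<beta>) \<cdot>\<^sub>m 1\<^sub>m (2 * n)) (\<lambda>s. \<zeta> s @\<^sub>v \<mu> s) (0\<^sub>v (2 * n)) \<phi>"
    and ups: "\<forall>t\<in>{0..ts N}. ((\<lambda>s. - \<beta> * \<upsilon> s + u s) has_integral \<upsilon> t) {0..t}"
    and A1: "coprime (monom 1 n + (\<Sum>k=1..n. monom (a k) (n - k))) (\<Sum>k=1..n. monom (b k) (n - k))"
    and A2: "\<not> eigenvalue (comp_mat n c) (- \<beta>)"
    and W_dim: "W \<in> carrier_mat N Nbar"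
    and A3_E: "sample_mat (2 * n) N ts (eps n c \<beta> x0) * W = 0\<^sub>m (2 * n) Nbar"
    and A3_rank: "vec_space.rank (2 * n + 1)
        ((sample_mat (2 * n) N ts \<phi> * W) @\<^sub>r (sample_mat 1 N ts (\<lambda>t. Matrix.vec 1 (\<lambda>_. \<upsilon> t)) * W))
        = 2 * n + 1"
  shows "AB_f n a b c =
    (sample_mat (2 * n) N ts (\<lambda>t. (\<zeta> t @\<^sub>v \<mu> t) - \<beta> \<cdot>\<^sub>v \<phi> t) * W) *
    pinv ((sample_mat (2 * n) N ts \<phi> * W) @\<^sub>r (sample_mat 1 N ts (\<lambda>t. Matrix.vec 1 (\<lambda>_. \<upsilon> t)) * W))"
proof -
  interpret filter_experiment n a b c \<beta> x0 u "ts N" x \<zeta> \<mu> \<phi> \<upsilon>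
    using n_pos x0_dim plant zeta mu phi ups A2 by unfold_locales
  define \<Phi> where "\<Phi> = sample_mat (2 * n) N ts \<phi>"
  define \<Upsilon> where "\<Upsilon> = sample_mat 1 N ts (\<lambda>t. Matrix.vec 1 (\<lambda>_. \<upsilon> t))"
  have \<Phi>: "\<Phi> \<in> carrier_mat (2 * n) N" and \<Upsilon>: "\<Upsilon> \<in> carrier_mat 1 N"
    unfolding \<Phi>_def \<Upsilon>_def by (rule sample_mat_carrier)+
  have \<Delta>: "sample_mat (2 * n) N ts (\<lambda>t. (\<zeta> t @\<^sub>v \<mu> t) - \<beta> \<cdot>\<^sub>v \<phi> t)
      = AB_f n a b c * (\<Phi> @\<^sub>r \<Upsilon>) + sample_mat (2 * n) N ts (eps n c \<beta> x0)"
    unfolding \<Phi>_def \<Upsilon>_def by (rule data_matrix_identity[where N = N and ts = ts, OF sample_times_mem[OF t_pos t_incr]])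
  have rank: "vec_space.rank (2 * n + 1) ((\<Phi> @\<^sub>r \<Upsilon>) * W) = 2 * n + 1"
    unfolding append_rows_mult[OF \<Phi> \<Upsilon> W_dim] unfolding \<Phi>_def \<Upsilon>_def by (rule A3_rank)
  have "AB_f n a b c = (sample_mat (2 * n) N ts (\<lambda>t. (\<zeta> t @\<^sub>v \<mu> t) - \<beta> \<cdot>\<^sub>v \<phi> t) * W) * pinv ((\<Phi> @\<^sub>r \<Upsilon>) * W)"
    unfolding \<Delta>
    by (rule left_factor_eq_mult_pinv[OF AB_f_carrier carrier_append_rows[OF \<Phi> \<Upsilon>] sample_mat_carrier W_dim A3_E rank])
  then show ?thesis unfolding append_rows_mult[OF \<Phi> \<Upsilon> W_dim] unfolding \<Phi>_def \<Upsilon>_def .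
qed

end
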